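(* Let $\mathcal{D}$ be a distribution over probability distributions on $\mathbb{R}$ such that, with probability $1$, the distribution $X\sim\mathcal{D}$ has no atoms. Let $q\in[0,1]$, $\epsilon>0$. The three-phase quantile estimator (described in the context) uses in expectation $O(1/\epsilon+\sigma_q^2/\epsilon^2)$ samples from $\mathcal{D}$, and with probability at least an absolute positive constant it outputs $\hat N$ satisfying $|\Pr_{Y\sim M(\mathcal{D})}(Y\le\hat N)-q|\le\epsilon$.
   Context: $M(\mathcal{D})$ is the mixture distribution: $\Pr_{M(\mathcal{D})}[A]=\mathbb{E}_{X\sim\mathcal{D}}[\Pr_X[A]]$ (atomless under the hypothesis). For an atomless distribution $X$ on $\mathbb{R}$, $q_X(x)=\Pr_{Y\sim X}(Y\le x)$. Let $N$ be the $q$-th quantile of $M(\mathcal{D})$, i.e. $N=\inf\{x: \Pr_{M(\mathcal{D})}(Y\le x)\ge q\}$, and $\sigma_q^2=\mathrm{Var}_{X\sim\mathcal{D}}[q_X(N)]$. Three-phase estimator (with sufficiently large absolute constants in the $O(\cdot)$): set $T_1=O(1/\epsilon)$; draw $X_1,\dots,X_{T_1}\sim\mathcal{D}$ and let $\tilde N$ be the $q$-th quantile of the mixture $M(X_1,\dots,X_{T_1})$ (uniform mixture of the sampled distributions); draw $X_{T_1+1},\dots,X_{2T_1}$ and set $\tilde\sigma^2=\frac1{T_1}\sum_{i=T_1+1}^{2T_1}(q_{X_i}(\tilde N)-q)^2$; set $T_2=O(1/\epsilon+\tilde\sigma^2/\epsilon^2)$; draw $X_{2T_1+1},\dots,X_{2T_1+T_2}$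 and return $\hat N$, the $q$-th quantile of the uniform mixture of these $T_2$ distributions. *)

theory Defs
  imports "HOL-Probability.Probability"
begin

text \<open>CDF of a distribution on the reals, evaluated at an extended real
  (so that quantiles equal to minus/plus infinity, needed for q = 0 or 1, are handled):
  q_X(t) = Pr_{Y ~ X}(Y <= t).\<close>
definition cdf_at :: "real measure \<Rightarrow> ereal \<Rightarrow> real" where
  "cdf_at X t = measure X {y::real. ereal y \<le> t}"

definition mixture_cdf :: "real measure measure \<Rightarrow> ereal \<Rightarrow> real" where
  "mixture_cdf D t = (\<integral>X. cdf_at X t \<partial>D)"

definition unif_mixture_cdf :: "(nat \<Rightarrow> real measure) \<Rightarrow> nat set \<Rightarrow> ereal \<Rightarrow> real" where
  "unif_mixture_cdf Xs I t = (\<Sum>i\<in>I. cdf_at (Xs i) t) / real (card I)"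

definition quantile :: "(ereal \<Rightarrow> real) \<Rightarrow> real \<Rightarrow> ereal" where
  "quantile F q = Inf {t::ereal. F t \<ge> q}"

definition sigma_sq :: "real measure measure \<Rightarrow> real \<Rightarrow> real" where
  "sigma_sq D q = prob_space.variance D (\<lambda>X. cdf_at X (quantile (mixture_cdf D) q))"

text \<open>The three-phase estimator, run on an i.i.d. sequence \<omega> 0, \<omega> 1, ... of
  draws from D, with constants a1 (phase 1/2 length T1 = ceil(a1/eps)) and a2
  (phase 3 length T2 = ceil(a2 (1/eps + sigma~^2/eps^2))).\<close>
definition est_T1 :: "real \<Rightarrow> real \<Rightarrow> nat" where
  "est_T1 a1 \<epsilon> = nat \<lceil>a1 / \<epsilon>\<rceil>"

definition est_Ntilde :: "real \<Rightarrow> real \<Rightarrow> real \<Rightarrow> (nat \<Rightarrow> real measure) \<Rightarrow> ereal" where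
  "est_Ntilde a1 q \<epsilon> \<omega> = quantile (unif_mixture_cdf \<omega> {0..<est_T1 a1 \<epsilon>}) q"

definition est_sigma_sq :: "real \<Rightarrow> real \<Rightarrow> real \<Rightarrow> (nat \<Rightarrow> real measure) \<Rightarrow> real" where
  "est_sigma_sq a1 q \<epsilon> \<omega> =
     (\<Sum>i\<in>{est_T1 a1 \<epsilon>..<2 * est_T1 a1 \<epsilon>}. (cdf_at (\<omega> i) (est_Ntilde a1 q \<epsilon> \<omega>) - q)\<^sup>2)
       / real (est_T1 a1 \<epsilon>)"

definition est_T2 :: "real \<Rightarrow> real \<Rightarrow> real \<Rightarrow> real \<Rightarrow> (nat \<Rightarrow> real measure) \<Rightarrow> nat" where
  "est_T2 a1 a2 q \<epsilon> \<omega> = nat \<lceil>a2 * (1 / \<epsilon> + est_sigma_sq a1 q \<epsilon> \<omega> / \<epsilon>\<^sup>2)\<rceil>"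

definition est_samples :: "real \<Rightarrow> real \<Rightarrow> real \<Rightarrow> real \<Rightarrow> (nat \<Rightarrow> real measure) \<Rightarrow> nat" where
  "est_samples a1 a2 q \<epsilon> \<omega> = 2 * est_T1 a1 \<epsilon> + est_T2 a1 a2 q \<epsilon> \<omega>"

definition est_output :: "real \<Rightarrow> real \<Rightarrow> real \<Rightarrow> real \<Rightarrow> (nat \<Rightarrow> real measure) \<Rightarrow> ereal" where
  "est_output a1 a2 q \<epsilon> \<omega> =
     quantile (unif_mixture_cdf \<omega>
       {2 * est_T1 a1 \<epsilon>..<2 * est_T1 a1 \<epsilon> + est_T2 a1 a2 q \<epsilon> \<omega>}) q"

end

theory Submission
  imports Defs
begin

text \<open>Since the sampled distributions are almost surely atomless, the mixture CDF F is continuous,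
  so F N = q and every level has an exact quantile. If the quantile of an empirical mixture of T
  draws has F-value above q + \<delta> (or below q - \<delta>), then either the empirical CDF at N deviates
  from q by T\<delta>/2, which Chebyshev bounds through the variance \<sigma>2, or the empirical mass of the
  band of true mass \<delta> next to N falls below half its mean, which Chernoff bounds. Hence the
  F-value of an empirical quantile misses q by more than \<delta> with probability
  O((\<sigma>2 T + 1) / (T \<delta>)^2).

  Sample count: the F-value of the phase-1 quantile is within O(\<sigma>2 + \<epsilon>) of q in expectation,
  and phase 2 averages squared deviations at that quantile, whose mean is at most 2\<sigma>2 plus twice
  this error; so the variance estimate, and with it T2, has the claimed expectation.

  Correctness: given phases 1 and 2, phase 3 is a fresh sample of size T2, and the tail bound
  makes its error at most \<epsilon> with high probability once T2 \<ge> a2/\<epsilon> and T2 \<ge> a2 \<sigma>2/(8 \<epsilon>^2).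
  The second condition fails only if the variance estimate is below \<sigma>2/8, which needs a bad
  phase-1 quantile (tail bound) or an atypically small phase-2 average (Chernoff).\<close>

lemma power2_diff_le_shift:
  fixes a b c :: real
  assumes "\<bar>a - b\<bar> \<le> 1"
  shows "(a - c)\<^sup>2 \<le> 2 * (b - c)\<^sup>2 + 2 * \<bar>a - b\<bar>"
proof -
  have "(a - b)\<^sup>2 \<le> \<bar>a - b\<bar>"
    using mult_right_mono[OF assms abs_ge_zero[of "a - b"]] by (simp add: power2_eq_square)
  moreover have "0 \<le> ((b - c) - (a - b))\<^sup>2" by simp
  ultimately show ?thesis by (simp add: power2_eq_square algebra_simps)
qed

lemma exp_neg_half_le:
  fixes y :: real
  assumes "0 \<le> y" "y \<le> 1"
  shows "exp (- y / 2) \<le> 1 - y / 3"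
proof -
  have "convex_on UNIV (\<lambda>x::real. exp (1 * x))" by (rule convex_on_exp) simp
  from convex_onD[OF this, of y 0 "-1/2"] assms
  have "exp (- y / 2) \<le> (1 - y) + y * exp (-1/2)" by simp
  moreover have "exp (-1/2::real) \<le> 2/3"
    using exp_ge_add_one_self[of "1/2::real"] by (simp add: exp_minus field_simps)
  ultimately show ?thesis
    using mult_left_mono[of "exp (-1/2::real)" "2/3" y] assms by simp
qed

lemma exp_neg_le_four_div_square:
  fixes x :: real
  assumes "0 < x"
  shows "exp (- x) \<le> 4 / x\<^sup>2"
proof -
  have "x / 2 \<le> exp (x / 2)"
    using exp_ge_add_one_self[of "x / 2"] by linarith
  then have "(x / 2)\<^sup>2 \<le> (exp (x / 2))\<^sup>2"
    using assms by (intro power_mono) auto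
  also have "\<dots> = exp x"
    by (simp add: power2_eq_square exp_add[symmetric])
  finally show ?thesis
    using assms by (simp add: exp_minus field_simps power2_eq_square)
qed

lemma le_dyadic_layers:
  fixes z m :: real
  assumes "0 < m" "0 \<le> z" "z \<le> 2 ^ K * m"
  shows "z \<le> m + 2 * (\<Sum>k<K. 2 ^ k * m * indicator {x. 2 ^ k * m < x} z)"
proof (cases "z \<le> m")
  case True
  moreover have "0 \<le> (\<Sum>k<K. 2 ^ k * m * indicator {x. 2 ^ k * m < x} z)"
    using assms by (intro sum_nonneg) auto
  ultimately show ?thesis by simp
next
  case False
  define n where "n = (LEAST k. z \<le> 2 ^ k * m)"
  have z_le: "z \<le> 2 ^ n * m" and "n \<le> K"
    unfolding n_def using assms(3) by (auto intro: LeastI Least_le)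
  moreover have "n \<noteq> 0" using z_le False by (intro notI) simp
  ultimately obtain j where j: "n = Suc j" "j < K"
    using not0_implies_Suc by fastforce
  then have "2 ^ j * m < z"
    using not_less_Least[of j "\<lambda>k. z \<le> 2 ^ k * m"] by (simp add: n_def not_le)
  then have "z \<le> 2 * (2 ^ j * m * indicator {x. 2 ^ j * m < x} z)"
    using z_le j by simp
  also have "\<dots> \<le> 2 * (\<Sum>k<K. 2 ^ k * m * indicator {x. 2 ^ k * m < x} z)"
    using j assms(1) by (intro mult_left_mono member_le_sum) auto
  finally show ?thesis using assms(1) by simp
qed

lemma nat_ceiling_eq_iff:
  "nat \<lceil>x :: real\<rceil> = n \<longleftrightarrow> (n = 0 \<and> x \<le> 0) \<or> (0 < n \<and> real n - 1 < x \<and> x \<le> real n)"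
  using ceiling_correct[of x] by (cases n) (auto, linarith+)

section \<open>Distribution functions on the extended reals\<close>

text \<open>Distribution functions are evaluated at extended reals, so one-sided continuity is stated
  along these sequences, which approach t strictly from above (resp. below) through real points.\<close>

definition ereal_approx_above :: "ereal \<Rightarrow> nat \<Rightarrow> ereal" where
  "ereal_approx_above t n =
     (case t of ereal r \<Rightarrow> ereal (r + 1 / Suc n) | PInfty \<Rightarrow> PInfty | MInfty \<Rightarrow> ereal (- real n))"

definition ereal_approx_below :: "ereal \<Rightarrow> nat \<Rightarrow> ereal" where
  "ereal_approx_below t n =
     (case t of ereal r \<Rightarrow> ereal (r - 1 / Suc n) | PInfty \<Rightarrow> ereal (real n) | MInfty \<Rightarrow> MInfty)"

lemma ereal_approx_above_gt: "t \<noteq> \<infinity> \<Longrightarrow> t < ereal_approx_above t n"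
  by (cases t) (auto simp: ereal_approx_above_def)

lemma ereal_approx_below_less: "t \<noteq> -\<infinity> \<Longrightarrow> ereal_approx_below t n < t"
  by (cases t) (auto simp: ereal_approx_below_def)

lemma decseq_ereal_approx_above: "decseq (ereal_approx_above t)"
  by (cases t) (auto simp: decseq_def ereal_approx_above_def frac_le)

lemma incseq_ereal_approx_below: "incseq (ereal_approx_below t)"
  by (cases t) (auto simp: incseq_def ereal_approx_below_def frac_le)

lemma INT_ereal_approx_above:
  assumes "t \<noteq> \<infinity>"
  shows "(\<Inter>n. {y::real. ereal y \<le> ereal_approx_above t n}) = {y. ereal y \<le> t}"
proof (cases t)
  case (real r)
  have "y \<le> r" if "\<forall>n. y \<le> r + 1 / Suc n" for y
  proof (rule ccontr)
    assume "\<not> y \<le> r"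
    then obtain n where "1 / Suc n < y - r"
      using reals_Archimedean[of "y - r"] by (auto simp: inverse_eq_divide)
    with that show False by (smt (verit))
  qed
  then show ?thesis
    using real by (force simp: ereal_approx_above_def intro: add_increasing2)
next
  case MInf
  have "\<not> (\<forall>n. y \<le> - real n)" for y :: real
    using reals_Archimedean2[of "-y"] by (smt (verit))
  then show ?thesis using MInf by (auto simp: ereal_approx_above_def)
qed (use assms in simp)

lemma UN_ereal_approx_below:
  assumes "t \<noteq> -\<infinity>"
  shows "(\<Union>n. {y::real. ereal y \<le> ereal_approx_below t n}) = {y. ereal y < t}"
proof (cases t)
  case (real r)
  have "\<exists>n. y \<le> r - 1 / Suc n" if "y < r" for y
  proof -
    obtain n where "1 / Suc n < r - y"
      using reals_Archimedean[of "r - y"] \<open>y < r\<close> by (auto simp: inverse_eq_divide)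
    then show ?thesis by (intro exI[of _ n]) simp
  qed
  moreover have "y < r" if "y \<le> r - 1 / Suc n" for y n
    using that by (smt (verit) divide_pos_pos of_nat_0_less_iff zero_less_Suc)
  ultimately show ?thesis using real by (auto simp: ereal_approx_below_def)
next
  case PInf
  then show ?thesis using real_arch_simple by (auto simp: ereal_approx_below_def)
qed (use assms in simp)

context real_distribution
begin

lemma cdf_at_nonneg: "0 \<le> cdf_at M t"
  by (simp add: cdf_at_def)

lemma cdf_at_le_1: "cdf_at M t \<le> 1"
  by (simp add: cdf_at_def)

lemma cdf_at_mono: "s \<le> t \<Longrightarrow> cdf_at M s \<le> cdf_at M t"
  unfolding cdf_at_def by (intro finite_measure_mono) auto

lemma cdf_at_PInf: "cdf_at M \<infinity> = 1"
  using prob_space by (simp add: cdf_at_def)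

lemma cdf_at_MInf: "cdf_at M (-\<infinity>) = 0"
  by (simp add: cdf_at_def)

lemma cdf_at_right_continuous:
  assumes "t \<noteq> \<infinity>"
  shows "(\<lambda>n. cdf_at M (ereal_approx_above t n)) \<longlonglongrightarrow> cdf_at M t"
  unfolding cdf_at_def INT_ereal_approx_above[OF assms, symmetric]
  using decseq_ereal_approx_above[of t]
  by (intro finite_Lim_measure_decseq) (auto simp: decseq_def intro: order.trans)

lemma cdf_at_left_continuous:
  assumes atomless: "\<And>x. measure M {x} = 0" and "t \<noteq> -\<infinity>"
  shows "(\<lambda>n. cdf_at M (ereal_approx_below t n)) \<longlonglongrightarrow> cdf_at M t"
proof -
  have "(\<lambda>n. cdf_at M (ereal_approx_below t n)) \<longlonglongrightarrow> measure M {y. ereal y < t}"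
    unfolding cdf_at_def UN_ereal_approx_below[OF assms(2), symmetric]
    using incseq_ereal_approx_below[of t]
    by (intro finite_Lim_measure_incseq) (auto simp: incseq_def intro: order.trans)
  moreover have "measure M {y. ereal y < t} = cdf_at M t"
  proof (cases t)
    case (real r)
    then have "{y. ereal y \<le> t} = {y. ereal y < t} \<union> {r}" by auto
    then have "cdf_at M t = measure M {y. ereal y < t} + measure M {r}"
      unfolding cdf_at_def using real by (subst finite_measure_Union[symmetric]) auto
    then show ?thesis using atomless by simp
  qed (use assms(2) in \<open>auto simp: cdf_at_def\<close>)
  ultimately show ?thesis by simp
qed

end

section \<open>Quantiles\<close>

lemma borel_measurable_mono_complete_linorder:
  fixes f :: "'a::{complete_linorder, linorder_topology} \<Rightarrow> 'b::{linorder_topology, second_countable_topology}"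
  assumes "mono f"
  shows "f \<in> borel_measurable borel"
proof (rule borel_measurableI_le)
  fix c
  define S where "S = {x. f x \<le> c}"
  have down_closed: "x \<in> S" if "y \<in> S" "x \<le> y" for x y
    using that monoD[OF assms, of x y] unfolding S_def by simp
  have "S = {..Sup S} \<or> S = {..<Sup S}"
  proof (cases "Sup S \<in> S")
    case True
    have "S = {..Sup S}"
    proof (intro equalityI subsetI)
      fix x assume "x \<in> S"
      then show "x \<in> {..Sup S}" by (simp add: Sup_upper)
    next
      fix x assume "x \<in> {..Sup S}"
      then show "x \<in> S" using down_closed[OF True] by simp
    qed
    then show ?thesis ..
  next
    case False
    have "S = {..<Sup S}"
    proof (intro equalityI subsetI)
      fix x assume "x \<in> S"
      then have "x \<le> Sup S" "x \<noteq> Sup S" using False by (auto simp: Sup_upper)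
      then show "x \<in> {..<Sup S}" by simp
    next
      fix x assume "x \<in> {..<Sup S}"
      then obtain y where "y \<in> S" "x < y" by (auto simp: less_Sup_iff)
      then show "x \<in> S" using down_closed[of y x] by simp
    qed
    then show ?thesis ..
  qed
  then have "S \<in> sets borel" by (metis atMost_borel lessThan_borel)
  then show "{x \<in> space borel. f x \<le> c} \<in> sets borel" by (simp add: S_def)
qed

lemma le_at_quantile:
  fixes F :: "ereal \<Rightarrow> real"
  assumes mono: "mono F"
    and right_cont: "\<And>t. t \<noteq> \<infinity> \<Longrightarrow> (\<lambda>n. F (ereal_approx_above t n)) \<longlonglongrightarrow> F t"
    and "q \<le> F \<infinity>"
  shows "q \<le> F (quantile F q)"
proof (rule ccontr)
  let ?Q = "quantile F q"
  assume "\<not> q \<le> F ?Q"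
  with assms(3) have "?Q \<noteq> \<infinity>" "F ?Q < q" by auto
  then obtain n where n: "F (ereal_approx_above ?Q n) < q"
    using order_tendstoD(2)[OF right_cont[OF \<open>?Q \<noteq> \<infinity>\<close>]]
    by (auto simp: eventually_sequentially)
  have "Inf {t. q \<le> F t} < ereal_approx_above ?Q n"
    using ereal_approx_above_gt[OF \<open>?Q \<noteq> \<infinity>\<close>] by (simp add: quantile_def)
  then obtain s where "q \<le> F s" "s < ereal_approx_above ?Q n"
    by (auto simp: Inf_less_iff)
  then have "F s \<le> F (ereal_approx_above ?Q n)" using monoD[OF mono] by simp
  with n \<open>q \<le> F s\<close> show False by simp
qed

lemma quantile_le_iff:
  fixes F :: "ereal \<Rightarrow> real"
  assumes mono: "mono F"
    and right_cont: "\<And>t. t \<noteq> \<infinity> \<Longrightarrow> (\<lambda>n. F (ereal_approx_above t n)) \<longlonglongrightarrow> F t"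
    and "q \<le> F \<infinity>"
  shows "quantile F q \<le> t \<longleftrightarrow> q \<le> F t"
proof
  assume "quantile F q \<le> t"
  then show "q \<le> F t"
    using le_at_quantile[OF assms] monoD[OF mono] order_trans by blast
qed (auto simp: quantile_def intro: Inf_lower)

lemma at_quantile_eq:
  fixes F :: "ereal \<Rightarrow> real"
  assumes mono: "mono F"
    and right_cont: "\<And>t. t \<noteq> \<infinity> \<Longrightarrow> (\<lambda>n. F (ereal_approx_above t n)) \<longlonglongrightarrow> F t"
    and left_cont: "\<And>t. t \<noteq> -\<infinity> \<Longrightarrow> (\<lambda>n. F (ereal_approx_below t n)) \<longlonglongrightarrow> F t"
    and "F (-\<infinity>) = 0" "F \<infinity> = 1" "0 \<le> c" "c \<le> 1"
  shows "F (quantile F c) = c"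
proof (rule antisym)
  let ?Q = "quantile F c"
  show "F ?Q \<le> c"
  proof (cases "?Q = -\<infinity>")
    case False
    have "\<not> ?Q \<le> ereal_approx_below ?Q n" for n
      using ereal_approx_below_less[OF False] by (simp add: not_le)
    then have "F (ereal_approx_below ?Q n) < c" for n
      using quantile_le_iff[OF mono right_cont] assms(5,7) by (simp add: not_le)
    then show ?thesis
      by (intro LIMSEQ_le_const2[OF left_cont[OF False]]) (auto intro: less_imp_le)
  qed (use assms in simp)
  show "c \<le> F ?Q"
    using le_at_quantile[OF mono right_cont] assms by simp
qed

section \<open>Bounded statistics of i.i.d. sequences\<close>

lemma (in finite_measure) integrable_bounded:
  fixes f :: "'a \<Rightarrow> real"
  assumes "f \<in> borel_measurable M" and "\<And>x. x \<in> space M \<Longrightarrow> \<bar>f x\<bar> \<le> B"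
  shows "integrable M f"
  using assms by (intro integrable_const_bound[where B=B] AE_I2) auto

lemma (in prob_space) expectation_unit_bounds:
  fixes f :: "'a \<Rightarrow> real"
  assumes "f \<in> borel_measurable M" and "\<And>x. x \<in> space M \<Longrightarrow> 0 \<le> f x \<and> f x \<le> 1"
  shows "0 \<le> expectation f \<and> expectation f \<le> 1"
proof
  show "0 \<le> expectation f"
    using assms by (intro integral_nonneg_AE AE_I2) auto
  have "integrable M f"
    using assms by (intro integrable_bounded[where B=1]) auto
  then have "expectation f \<le> expectation (\<lambda>_. 1)"
    using assms by (intro integral_mono) auto
  then show "expectation f \<le> 1" by (simp add: prob_space)
qed

lemma (in prob_space) expectation_exp_neg_half_le:
  fixes f :: "'a \<Rightarrow> real"
  assumes [measurable]: "f \<in> borel_measurable M" and f_bounds: "\<And>x. x \<in> space M \<Longrightarrow> 0 \<le> f x \<and> f x \<le> 1"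
  shows "(\<integral>x. exp (- f x / 2) \<partial>M) \<le> exp (- expectation f / 3)"
proof -
  have "integrable M f" "integrable M (\<lambda>x. exp (- f x / 2))"
    using f_bounds by (auto intro!: integrable_bounded[where B=1])
  then have "(\<integral>x. exp (- f x / 2) \<partial>M) \<le> (\<integral>x. 1 - f x / 3 \<partial>M)"
    using f_bounds by (intro integral_mono exp_neg_half_le) auto
  also have "\<dots> = 1 - expectation f / 3"
    using \<open>integrable M f\<close> by (simp add: prob_space)
  also have "\<dots> \<le> exp (- expectation f / 3)"
    using exp_ge_add_one_self[of "- expectation f / 3"] by simp
  finally show ?thesis .
qed

lemma (in prob_space) expectation_le_of_quadratic_tail:
  fixes Z :: "'a \<Rightarrow> real"
  assumes [measurable]: "Z \<in> borel_measurable M"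
    and Z_bounds: "\<And>\<omega>. \<omega> \<in> space M \<Longrightarrow> 0 \<le> Z \<omega> \<and> Z \<omega> \<le> 1"
    and "0 < m" "0 \<le> A"
    and tail: "\<And>\<delta>. 0 < \<delta> \<Longrightarrow> prob {\<omega> \<in> space M. \<delta> < Z \<omega>} \<le> A / \<delta>\<^sup>2"
  shows "expectation Z \<le> m + 4 * A / m"
proof -
  obtain K :: nat where "1 / m < 2 ^ K"
    using real_arch_pow[of 2 "1 / m"] by auto
  then have "1 \<le> 2 ^ K * m" using \<open>0 < m\<close> by (simp add: field_simps)
  define layer where "layer k \<omega> = 2 ^ k * m * indicator {\<omega> \<in> space M. 2 ^ k * m < Z \<omega>} \<omega>"
    for k \<omega>
  have integrable_layer: "integrable M (layer k)" for k
    unfolding layer_def by (intro integrable_mult_right integrable_real_indicator) (auto simp: emeasure_eq_measure)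
  have integral_layer: "(\<integral>\<omega>. layer k \<omega> \<partial>M) \<le> A / (2 ^ k * m)" for k
  proof -
    have "(\<integral>\<omega>. layer k \<omega> \<partial>M) = 2 ^ k * m * prob {\<omega> \<in> space M. 2 ^ k * m < Z \<omega>}"
      by (simp add: layer_def)
    also have "\<dots> \<le> 2 ^ k * m * (A / (2 ^ k * m)\<^sup>2)"
      using \<open>0 < m\<close> by (intro mult_left_mono tail) auto
    finally show ?thesis using \<open>0 < m\<close> by (simp add: power2_eq_square)
  qed
  have "expectation Z \<le> (\<integral>\<omega>. m + 2 * (\<Sum>k<K. layer k \<omega>) \<partial>M)"
  proof (rule integral_mono)
    show "integrable M Z"
      using Z_bounds by (intro integrable_bounded[where B=1]) auto
    show "integrable M (\<lambda>\<omega>. m + 2 * (\<Sum>k<K. layer k \<omega>))"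
      using integrable_layer by auto
    show "Z \<omega> \<le> m + 2 * (\<Sum>k<K. layer k \<omega>)" if "\<omega> \<in> space M" for \<omega>
      using le_dyadic_layers[OF \<open>0 < m\<close>, of "Z \<omega>" K] Z_bounds[OF that] \<open>1 \<le> 2 ^ K * m\<close> that
      by (simp add: layer_def indicator_def)
  qed
  also have "\<dots> = m + 2 * (\<Sum>k<K. \<integral>\<omega>. layer k \<omega> \<partial>M)"
    using integrable_layer by (simp add: prob_space)
  also have "\<dots> \<le> m + 2 * (\<Sum>k<K. (A / m) * (1/2) ^ k)"
    using integral_layer by (intro add_left_mono mult_left_mono sum_mono) (auto simp: power_divide mult.commute)
  also have "(\<Sum>k<K. (A / m) * (1/2::real) ^ k) \<le> (A / m) * 2"
    unfolding sum_distrib_left[symmetric]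
    using \<open>0 < m\<close> \<open>0 \<le> A\<close> by (intro mult_left_mono) (auto simp: sum_gp_strict)
  finally show ?thesis by simp
qed

context sequence_space
begin

lemma integral_prod_coordinates:
  fixes g :: "nat \<Rightarrow> 'a \<Rightarrow> real"
  assumes I: "finite I" and g: "\<And>i. i \<in> I \<Longrightarrow> integrable M (g i)"
  shows "(\<integral>\<omega>. (\<Prod>i\<in>I. g i (\<omega> i)) \<partial>S) = (\<Prod>i\<in>I. integral\<^sup>L M (g i))"
proof -
  have measurable_prod: "(\<lambda>x. \<Prod>i\<in>I. g i (x i)) \<in> borel_measurable (\<Pi>\<^sub>M i\<in>I. M)"
    using g by (intro borel_measurable_prod)
       (auto intro: measurable_compose[OF measurable_component_singleton])
  have "(\<integral>\<omega>. (\<Prod>i\<in>I. g i (\<omega> i)) \<partial>S) = (\<integral>\<omega>. (\<Prod>i\<in>I. g i (restrict \<omega> I i)) \<partial>S)"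
    by (intro Bochner_Integration.integral_cong refl prod.cong) auto
  also have "\<dots> = (\<integral>x. (\<Prod>i\<in>I. g i (x i)) \<partial>distr S (\<Pi>\<^sub>M i\<in>I. M) (\<lambda>\<omega>. restrict \<omega> I))"
    by (rule integral_distr[symmetric, OF _ measurable_prod]) (rule measurable_restrict_subset, simp)
  also have "\<dots> = (\<integral>x. (\<Prod>i\<in>I. g i (x i)) \<partial>(\<Pi>\<^sub>M i\<in>I. M))"
    using distr_PiM_reindex[of UNIV "\<lambda>_. M" id I] M.prob_space_axioms by simp
  also have "\<dots> = (\<Prod>i\<in>I. integral\<^sup>L M (g i))"
    by (rule product_integral_prod[OF I g])
  finally show ?thesis .
qed

lemma integral_coordinate: "integrable M (f :: 'a \<Rightarrow> real) \<Longrightarrow> (\<integral>\<omega>. f (\<omega> i) \<partial>S) = integral\<^sup>L M f"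
  using integral_prod_coordinates[of "{i}" "\<lambda>_. f"] by simp

lemma integral_coordinate_pair:
  fixes f g :: "'a \<Rightarrow> real"
  assumes "integrable M f" "integrable M g" "i \<noteq> j"
  shows "(\<integral>\<omega>. f (\<omega> i) * g (\<omega> j) \<partial>S) = integral\<^sup>L M f * integral\<^sup>L M g"
  using integral_prod_coordinates[of "{i, j}" "\<lambda>k. if k = i then f else g"] assms by simp

lemma integral_sum_centered_sq:
  fixes f :: "'a \<Rightarrow> real"
  assumes [measurable]: "f \<in> borel_measurable M" and f_bounds: "\<And>x. x \<in> space M \<Longrightarrow> 0 \<le> f x \<and> f x \<le> 1"
    and "finite I"
  shows "(\<integral>\<omega>. (\<Sum>i\<in>I. f (\<omega> i) - M.expectation f)\<^sup>2 \<partial>S) = card I * M.variance f"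
proof -
  define c where "c x = f x - M.expectation f" for x
  have "0 \<le> M.expectation f \<and> M.expectation f \<le> 1"
    using M.expectation_unit_bounds f_bounds by simp
  then have c_bound: "\<bar>c x\<bar> \<le> 1" if "x \<in> space M" for x
    using f_bounds[OF that] by (auto simp: c_def)
  have [measurable]: "c \<in> borel_measurable M" unfolding c_def by measurable
  then have integrable_c: "integrable M c" and integrable_c2: "integrable M (\<lambda>x. (c x)\<^sup>2)"
    using c_bound by (auto intro!: M.integrable_bounded[where B=1] simp: abs_square_le_1)
  have "integrable M f"
    using f_bounds by (intro M.integrable_bounded[where B=1]) auto
  then have "integral\<^sup>L M c = 0"
    unfolding c_def by (subst Bochner_Integration.integral_diff) (auto simp: M.prob_space)
  then have cross: "(\<integral>\<omega>. c (\<omega> i) * c (\<omega> j) \<partial>S) = (if i = j then M.variance f else 0)" for i j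
    using integral_coordinate[OF integrable_c2, of i] integral_coordinate_pair[OF integrable_c integrable_c]
    by (auto simp: c_def power2_eq_square)
  have "integrable S (\<lambda>\<omega>. c (\<omega> i) * c (\<omega> j))" for i j
    using c_bound by (intro P.integrable_bounded[where B=1])
      (auto simp: abs_mult space_PiM intro!: mult_le_one)
  then have "(\<integral>\<omega>. (\<Sum>i\<in>I. c (\<omega> i))\<^sup>2 \<partial>S) = (\<Sum>i\<in>I. \<Sum>j\<in>I. (if i = j then M.variance f else 0))"
    by (simp add: power2_eq_square sum_product Bochner_Integration.integral_sum cross)
  then show ?thesis
    using \<open>finite I\<close> by (simp add: c_def)
qed

lemma Chebyshev_sum_coordinates:
  fixes f :: "'a \<Rightarrow> real"
  assumes [measurable]: "f \<in> borel_measurable M" and f_bounds: "\<And>x. x \<in> space M \<Longrightarrow> 0 \<le> f x \<and> f x \<le> 1"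
    and "finite I" and "0 < a"
  shows "measure S {\<omega> \<in> space S. a \<le> \<bar>\<Sum>i\<in>I. f (\<omega> i) - M.expectation f\<bar>} \<le> card I * M.variance f / a\<^sup>2"
proof -
  let ?Y = "\<lambda>\<omega>. (\<Sum>i\<in>I. f (\<omega> i) - M.expectation f)\<^sup>2"
  have "\<bar>\<Sum>i\<in>I. f (\<omega> i) - M.expectation f\<bar> \<le> card I" if "\<omega> \<in> space S" for \<omega>
  proof -
    have "0 \<le> M.expectation f \<and> M.expectation f \<le> 1"
      using M.expectation_unit_bounds f_bounds by simp
    then have "\<bar>f (\<omega> i) - M.expectation f\<bar> \<le> 1" for i
      using f_bounds[of "\<omega> i"] that by (auto simp: space_PiM PiE_iff abs_le_iff)
    then have "(\<Sum>i\<in>I. \<bar>f (\<omega> i) - M.expectation f\<bar>) \<le> (\<Sum>i\<in>I. 1)"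
      by (intro sum_mono)
    then show ?thesis
      by (intro order_trans[OF sum_abs]) simp
  qed
  then have "integrable S ?Y"
    by (intro P.integrable_bounded[where B="(card I)\<^sup>2"])
       (auto simp: abs_le_square_iff[symmetric] power_abs)
  then have "measure S {\<omega> \<in> space S. a\<^sup>2 \<le> ?Y \<omega>} \<le> (\<integral>\<omega>. ?Y \<omega> \<partial>S) / a\<^sup>2"
    using \<open>0 < a\<close> by (intro integral_Markov_inequality_measure[where A="space S"]) auto
  moreover have "a \<le> \<bar>y\<bar> \<longleftrightarrow> a\<^sup>2 \<le> y\<^sup>2" for y :: real
    using \<open>0 < a\<close> by (simp add: abs_le_square_iff[symmetric])
  ultimately show ?thesis
    by (simp add: integral_sum_centered_sq[OF assms(1,2,3)])
qed

lemma Chernoff_sum_coordinates_lower: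
  fixes f :: "'a \<Rightarrow> real"
  assumes [measurable]: "f \<in> borel_measurable M" and f_bounds: "\<And>x. x \<in> space M \<Longrightarrow> 0 \<le> f x \<and> f x \<le> 1"
    and I: "finite I"
  shows "measure S {\<omega> \<in> space S. (\<Sum>i\<in>I. f (\<omega> i)) \<le> card I * M.expectation f / 2}
      \<le> exp (- (card I * M.expectation f / 12))"
proof -
  define \<mu> where "\<mu> = M.expectation f"
  define T where "T = real (card I)"
  define u where "u \<omega> = exp (- (\<Sum>i\<in>I. f (\<omega> i)) / 2)" for \<omega> :: "nat \<Rightarrow> 'a"
  have u_prod: "u \<omega> = (\<Prod>i\<in>I. exp (- f (\<omega> i) / 2))" for \<omega>
    using exp_sum[OF I, of "\<lambda>i. - f (\<omega> i) / 2"] by (simp add: u_def sum_negf sum_divide_distrib)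
  have [measurable]: "u \<in> borel_measurable S"
    unfolding u_def by measurable
  have integrable_exp: "integrable M (\<lambda>x. exp (- f x / 2))"
    using f_bounds by (intro M.integrable_bounded[where B=1]) auto
  have "0 \<le> (\<Sum>i\<in>I. f (\<omega> i))" if "\<omega> \<in> space S" for \<omega>
    using f_bounds that by (auto intro!: sum_nonneg simp: space_PiM PiE_iff)
  then have integrable_u: "integrable S u"
    by (intro P.integrable_bounded[where B=1]) (auto simp: u_def)
  have "(\<integral>\<omega>. u \<omega> \<partial>S) = (\<Prod>i\<in>I. (\<integral>x. exp (- f x / 2) \<partial>M))"
    unfolding u_prod using integrable_exp by (intro integral_prod_coordinates[OF I])
  also have "\<dots> \<le> (\<Prod>i\<in>I. exp (- \<mu> / 3))"
    using M.expectation_exp_neg_half_le[OF _ f_bounds] unfolding \<mu>_def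
    by (intro prod_mono conjI integral_nonneg_AE AE_I2) auto
  also have "\<dots> = exp (- T * \<mu> / 3)"
    by (simp add: T_def exp_of_nat_mult[symmetric])
  finally have integral_u: "(\<integral>\<omega>. u \<omega> \<partial>S) \<le> exp (- T * \<mu> / 3)" .
  have "measure S {\<omega> \<in> space S. (\<Sum>i\<in>I. f (\<omega> i)) \<le> T * \<mu> / 2}
      \<le> measure S {\<omega> \<in> space S. exp (- T * \<mu> / 4) \<le> u \<omega>}"
    by (intro P.finite_measure_mono) (auto simp: u_def)
  also have "\<dots> \<le> (\<integral>\<omega>. u \<omega> \<partial>S) / exp (- T * \<mu> / 4)"
    by (rule integral_Markov_inequality_measure[where A="space S", OF integrable_u]) (auto simp: u_def)
  also have "\<dots> \<le> exp (- T * \<mu> / 3) / exp (- T * \<mu> / 4)"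
    using integral_u by (intro divide_right_mono) auto
  also have "\<dots> = exp (- (T * \<mu> / 12))"
    by (simp add: exp_diff[symmetric])
  finally show ?thesis by (simp add: T_def \<mu>_def)
qed

lemma nn_integral_average_coordinates:
  fixes f :: "'a \<Rightarrow> real"
  assumes [measurable]: "f \<in> borel_measurable M" and f_bounds: "\<And>x. x \<in> space M \<Longrightarrow> 0 \<le> f x \<and> f x \<le> 1"
    and "0 < T"
  shows "(\<integral>\<^sup>+\<omega>. ennreal ((\<Sum>j\<in>{0..<T}. f (\<omega> j)) / T) \<partial>S) = ennreal (M.expectation f)"
proof -
  have f_space: "0 \<le> f (\<omega> j) \<and> f (\<omega> j) \<le> 1" if "\<omega> \<in> space S" for \<omega> j
    using f_bounds that by (auto simp: space_PiM PiE_iff)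
  have integrable_coord: "integrable S (\<lambda>\<omega>. f (\<omega> j))" for j
    using f_space by (intro P.integrable_bounded[where B=1]) auto
  have average_bounds: "0 \<le> (\<Sum>j\<in>{0..<T}. f (\<omega> j)) / T \<and> (\<Sum>j\<in>{0..<T}. f (\<omega> j)) / T \<le> 1"
    if "\<omega> \<in> space S" for \<omega>
    using sum_mono[of "{0..<T}" "\<lambda>j. f (\<omega> j)" "\<lambda>_. 1"] sum_nonneg[of "{0..<T}" "\<lambda>j. f (\<omega> j)"]
      f_space[OF that] \<open>0 < T\<close>
    by simp
  then have "\<bar>(\<Sum>j\<in>{0..<T}. f (\<omega> j)) / T\<bar> \<le> 1" if "\<omega> \<in> space S" for \<omega>
    using that unfolding abs_le_iff by fastforce
  with average_bounds have "(\<integral>\<^sup>+\<omega>. ennreal ((\<Sum>j\<in>{0..<T}. f (\<omega> j)) / T) \<partial>S)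
      = ennreal (\<integral>\<omega>. (\<Sum>j\<in>{0..<T}. f (\<omega> j)) / T \<partial>S)"
    by (intro nn_integral_eq_integral P.integrable_bounded[where B=1] AE_I2) auto
  also have "(\<integral>\<omega>. (\<Sum>j\<in>{0..<T}. f (\<omega> j)) / T \<partial>S) = M.expectation f"
    using integrable_coord \<open>0 < T\<close> f_bounds
    by (simp add: Bochner_Integration.integral_sum integral_coordinate M.integrable_bounded[where B=1])
  finally show ?thesis .
qed

text \<open>comb_seq n \<alpha> \<beta> keeps the first n coordinates of \<alpha> and continues with those of \<beta>;
  since it pushes S \<Otimes> S forward to S, this is how we condition on the first n draws.\<close>

lemma nn_integral_comb_seq:
  assumes [measurable]: "f \<in> borel_measurable S"
  shows "(\<integral>\<^sup>+\<omega>. f \<omega> \<partial>S) = (\<integral>\<^sup>+\<alpha>. (\<integral>\<^sup>+\<beta>. f (comb_seq n \<alpha> \<beta>) \<partial>S) \<partial>S)"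
proof -
  have "(\<integral>\<^sup>+\<omega>. f \<omega> \<partial>S) = (\<integral>\<^sup>+\<omega>. f \<omega> \<partial>distr (S \<Otimes>\<^sub>M S) S (\<lambda>(\<omega>, \<omega>'). comb_seq n \<omega> \<omega>'))"
    by (simp add: PiM_comb_seq)
  also have "\<dots> = (\<integral>\<^sup>+x. f ((\<lambda>(\<omega>, \<omega>'). comb_seq n \<omega> \<omega>') x) \<partial>(S \<Otimes>\<^sub>M S))"
    by (rule nn_integral_distr) (simp_all add: measurable_comb_seq)
  also have "\<dots> = (\<integral>\<^sup>+\<alpha>. (\<integral>\<^sup>+\<beta>. f (comb_seq n \<alpha> \<beta>) \<partial>S) \<partial>S)"
    by (subst P.nn_integral_fst[symmetric])
       (rule measurable_compose[OF measurable_comb_seq], simp_all)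
  finally show ?thesis .
qed

lemma measure_le_comb_seq:
  assumes [measurable]: "A \<in> sets S" and "0 \<le> B"
    and bound: "\<And>\<alpha>. \<alpha> \<in> space S \<Longrightarrow> measure S {\<beta> \<in> space S. comb_seq n \<alpha> \<beta> \<in> A} \<le> B"
  shows "measure S A \<le> B"
proof -
  have "emeasure S A = (\<integral>\<^sup>+\<alpha>. (\<integral>\<^sup>+\<beta>. indicator A (comb_seq n \<alpha> \<beta>) \<partial>S) \<partial>S)"
    by (subst nn_integral_comb_seq[symmetric]) simp_all
  also have "\<dots> \<le> (\<integral>\<^sup>+\<alpha>. ennreal B \<partial>S)"
  proof (intro nn_integral_mono)
    fix \<alpha> assume "\<alpha> \<in> space S"
    then have [measurable]: "(\<lambda>\<beta>. comb_seq n \<alpha> \<beta>) \<in> S \<rightarrow>\<^sub>M S"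
      using measurable_Pair2[OF measurable_comb_seq] by simp
    have "(\<integral>\<^sup>+\<beta>. indicator A (comb_seq n \<alpha> \<beta>) \<partial>S)
        = (\<integral>\<^sup>+\<beta>. indicator {\<beta> \<in> space S. comb_seq n \<alpha> \<beta> \<in> A} \<beta> \<partial>S)"
      by (intro nn_integral_cong) (auto simp: indicator_def)
    also have "\<dots> = emeasure S {\<beta> \<in> space S. comb_seq n \<alpha> \<beta> \<in> A}"
      by (intro nn_integral_indicator) measurable
    also have "\<dots> \<le> ennreal B"
      using bound[OF \<open>\<alpha> \<in> space S\<close>] by (simp add: P.emeasure_eq_measure ennreal_leI)
    finally show "(\<integral>\<^sup>+\<beta>. indicator A (comb_seq n \<alpha> \<beta>) \<partial>S) \<le> ennreal B" .
  qed
  also have "\<dots> = ennreal B"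
    by (simp add: P.emeasure_space_1)
  finally show ?thesis
    using \<open>0 \<le> B\<close> by (simp add: P.emeasure_eq_measure)
qed

lemma comb_seq_in_space:
  "\<alpha> \<in> space S \<Longrightarrow> \<beta> \<in> space S \<Longrightarrow> comb_seq n \<alpha> \<beta> \<in> space S"
  by (auto simp: space_PiM comb_seq_def PiE_iff)

end

section \<open>Mixtures of atomless distributions\<close>

locale atomless_mixture = D: prob_space D for D :: "real measure measure" +
  assumes sets_D: "sets D = sets (prob_algebra borel)"
    and atomless: "AE X in D. \<forall>x. measure X {x} = 0"
begin

abbreviation "F \<equiv> mixture_cdf D"

lemma real_distribution_of_space: "X \<in> space D \<Longrightarrow> real_distribution X"
  using sets_eq_imp_space_eq[OF sets_D]
  by (simp add: real_distribution_def real_distribution_axioms_def space_prob_algebra)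

lemma cdf_at_bounds: "X \<in> space D \<Longrightarrow> 0 \<le> cdf_at X t \<and> cdf_at X t \<le> 1"
  using real_distribution.cdf_at_nonneg real_distribution.cdf_at_le_1 real_distribution_of_space
  by blast

lemma measurable_cdf_at[measurable]: "(\<lambda>X. cdf_at X t) \<in> borel_measurable D"
  unfolding cdf_at_def measurable_cong_sets[OF sets_D refl]
  by (rule measurable_measure_prob_algebra) simp

lemma integrable_cdf_at[simp]: "integrable D (\<lambda>X. cdf_at X t)"
  using cdf_at_bounds by (intro D.integrable_bounded[where B=1]) auto

lemma mono_mixture_cdf: "mono F"
proof
  fix s t :: ereal assume "s \<le> t"
  then show "F s \<le> F t"
    unfolding mixture_cdf_def
    by (intro integral_mono) (auto dest: real_distribution_of_space real_distribution.cdf_at_mono)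
qed

lemma mixture_cdf_MInf: "F (-\<infinity>) = 0"
  unfolding mixture_cdf_def
  by (subst Bochner_Integration.integral_cong[OF refl, where g="\<lambda>_. 0"])
     (auto dest: real_distribution_of_space real_distribution.cdf_at_MInf)

lemma mixture_cdf_PInf: "F \<infinity> = 1"
  unfolding mixture_cdf_def
  by (subst Bochner_Integration.integral_cong[OF refl, where g="\<lambda>_. 1"])
     (auto dest: real_distribution_of_space real_distribution.cdf_at_PInf simp: D.prob_space)

lemma mixture_cdf_bounds: "0 \<le> F t \<and> F t \<le> 1"
  using monoD[OF mono_mixture_cdf, of "-\<infinity>" t] monoD[OF mono_mixture_cdf, of t \<infinity>]
  by (simp add: mixture_cdf_MInf mixture_cdf_PInf)

lemma mixture_cdf_right_continuous:
  assumes "t \<noteq> \<infinity>"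
  shows "(\<lambda>n. F (ereal_approx_above t n)) \<longlonglongrightarrow> F t"
  unfolding mixture_cdf_def
proof (rule integral_dominated_convergence[where w="\<lambda>_. 1"])
  show "AE X in D. (\<lambda>n. cdf_at X (ereal_approx_above t n)) \<longlonglongrightarrow> cdf_at X t"
    using assms by (auto intro!: AE_I2 real_distribution.cdf_at_right_continuous
        dest: real_distribution_of_space)
  show "AE X in D. norm (cdf_at X (ereal_approx_above t n)) \<le> 1" for n
    using cdf_at_bounds by (auto intro!: AE_I2)
qed simp_all

lemma mixture_cdf_left_continuous:
  assumes "t \<noteq> -\<infinity>"
  shows "(\<lambda>n. F (ereal_approx_below t n)) \<longlonglongrightarrow> F t"
  unfolding mixture_cdf_def
proof (rule integral_dominated_convergence[where w="\<lambda>_. 1"])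
  show "AE X in D. (\<lambda>n. cdf_at X (ereal_approx_below t n)) \<longlonglongrightarrow> cdf_at X t"
    using atomless
  proof (rule AE_mp[OF _ AE_I2], intro impI)
    fix X assume "X \<in> space D" "\<forall>x. measure X {x} = 0"
    then show "(\<lambda>n. cdf_at X (ereal_approx_below t n)) \<longlonglongrightarrow> cdf_at X t"
      using assms real_distribution_of_space real_distribution.cdf_at_left_continuous by blast
  qed
  show "AE X in D. norm (cdf_at X (ereal_approx_below t n)) \<le> 1" for n
    using cdf_at_bounds by (auto intro!: AE_I2)
qed simp_all

lemma mixture_cdf_quantile: "0 \<le> c \<Longrightarrow> c \<le> 1 \<Longrightarrow> F (quantile F c) = c"
  by (rule at_quantile_eq[OF mono_mixture_cdf mixture_cdf_right_continuous
        mixture_cdf_left_continuous mixture_cdf_MInf mixture_cdf_PInf])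

lemma quantile_mixture_cdf_le_iff:
  assumes "c \<le> 1"
  shows "quantile F c \<le> t \<longleftrightarrow> c \<le> F t"
  using quantile_le_iff[OF mono_mixture_cdf mixture_cdf_right_continuous, of c t] assms
  by (simp add: mixture_cdf_PInf)

lemma borel_measurable_mixture_cdf[measurable]: "F \<in> borel_measurable borel"
  by (rule borel_measurable_mono_complete_linorder[OF mono_mixture_cdf])

end

locale mixture_quantile = atomless_mixture +
  fixes q :: real
  assumes q_nonneg: "0 \<le> q" and q_le_1: "q \<le> 1"
begin

definition N :: ereal where "N = quantile F q"

abbreviation "\<sigma>2 \<equiv> sigma_sq D q"

lemma mixture_cdf_N: "F N = q"
  unfolding N_def using mixture_cdf_quantile q_nonneg q_le_1 .

lemma integral_cdf_at_N: "(\<integral>X. cdf_at X N \<partial>D) = q"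
  using mixture_cdf_N by (simp add: mixture_cdf_def)

lemma abs_mixture_cdf_diff_le_1: "\<bar>F t - q\<bar> \<le> 1"
  using mixture_cdf_bounds[of t] q_nonneg q_le_1 by auto

definition mean_sq_dev :: "ereal \<Rightarrow> real" where
  "mean_sq_dev t = (\<integral>X. (cdf_at X t - q)\<^sup>2 \<partial>D)"

lemma sq_dev_bounds: "X \<in> space D \<Longrightarrow> 0 \<le> (cdf_at X t - q)\<^sup>2 \<and> (cdf_at X t - q)\<^sup>2 \<le> 1"
  using cdf_at_bounds[of X t] q_nonneg q_le_1 by (auto simp: abs_square_le_1)

lemma integrable_sq_dev[simp]: "integrable D (\<lambda>X. (cdf_at X t - q)\<^sup>2)"
  using sq_dev_bounds by (intro D.integrable_bounded[where B=1]) auto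

lemma sigma_sq_eq: "\<sigma>2 = mean_sq_dev N"
  unfolding sigma_sq_def N_def[symmetric] mean_sq_dev_def using integral_cdf_at_N by simp

lemma mean_sq_dev_bounds: "0 \<le> mean_sq_dev t \<and> mean_sq_dev t \<le> 1"
  using integral_mono[OF integrable_sq_dev D.integrable_const[of 1]] sq_dev_bounds
  by (auto simp: mean_sq_dev_def D.prob_space)

lemma sigma_sq_nonneg: "0 \<le> \<sigma>2"
  using mean_sq_dev_bounds by (simp add: sigma_sq_eq)

lemma sigma_sq_le_1: "\<sigma>2 \<le> 1"
  using mean_sq_dev_bounds by (simp add: sigma_sq_eq)

lemma integral_abs_cdf_at_diff: "(\<integral>X. \<bar>cdf_at X N - cdf_at X t\<bar> \<partial>D) = \<bar>F t - q\<bar>"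
proof (cases "t \<le> N")
  case True
  then have "(\<integral>X. \<bar>cdf_at X N - cdf_at X t\<bar> \<partial>D) = (\<integral>X. cdf_at X N - cdf_at X t \<partial>D)"
    by (intro Bochner_Integration.integral_cong)
       (auto dest!: real_distribution_of_space dest: real_distribution.cdf_at_mono)
  then show ?thesis
    using monoD[OF mono_mixture_cdf True] by (simp add: mixture_cdf_def[symmetric] mixture_cdf_N)
next
  case False
  then have "N \<le> t" by simp
  then have "(\<integral>X. \<bar>cdf_at X N - cdf_at X t\<bar> \<partial>D) = (\<integral>X. cdf_at X t - cdf_at X N \<partial>D)"
    by (intro Bochner_Integration.integral_cong)
       (auto dest!: real_distribution_of_space dest: real_distribution.cdf_at_mono)
  then show ?thesis
    using monoD[OF mono_mixture_cdf \<open>N \<le> t\<close>] by (simp add: mixture_cdf_def[symmetric] mixture_cdf_N)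
qed

lemma mean_sq_dev_shift_le:
  "mean_sq_dev s \<le> 2 * mean_sq_dev t + 2 * (\<integral>X. \<bar>cdf_at X s - cdf_at X t\<bar> \<partial>D)"
proof -
  have gap_le_1: "\<bar>cdf_at X s - cdf_at X t\<bar> \<le> 1" if "X \<in> space D" for X
    using cdf_at_bounds[OF that, of s] cdf_at_bounds[OF that, of t] by auto
  then have integrable_gap: "integrable D (\<lambda>X. \<bar>cdf_at X s - cdf_at X t\<bar>)"
    by (intro D.integrable_bounded[where B=1]) auto
  have "mean_sq_dev s \<le> (\<integral>X. 2 * (cdf_at X t - q)\<^sup>2 + 2 * \<bar>cdf_at X s - cdf_at X t\<bar> \<partial>D)"
    unfolding mean_sq_dev_def using integrable_gap
    by (intro integral_mono) (auto intro: power2_diff_le_shift gap_le_1)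
  also have "\<dots> = 2 * mean_sq_dev t + 2 * (\<integral>X. \<bar>cdf_at X s - cdf_at X t\<bar> \<partial>D)"
    using integrable_gap by (simp add: mean_sq_dev_def)
  finally show ?thesis .
qed

lemma sigma_sq_le_mean_sq_dev: "\<sigma>2 \<le> 2 * mean_sq_dev t + 2 * \<bar>F t - q\<bar>"
  using mean_sq_dev_shift_le[of N t] by (simp add: sigma_sq_eq integral_abs_cdf_at_diff)

lemma mean_sq_dev_ge_of_close:
  assumes "\<bar>F t - q\<bar> \<le> \<sigma>2 / 4"
  shows "\<sigma>2 / 4 \<le> mean_sq_dev t"
proof -
  have "\<sigma>2 \<le> 2 * mean_sq_dev t + 2 * \<bar>F t - q\<bar>"
    by (rule sigma_sq_le_mean_sq_dev)
  also have "\<dots> \<le> 2 * mean_sq_dev t + \<sigma>2 / 2"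
    using assms by simp
  finally show ?thesis by simp
qed

lemma mean_sq_dev_le_sigma_sq: "mean_sq_dev t \<le> 2 * \<sigma>2 + 2 * \<bar>F t - q\<bar>"
  using mean_sq_dev_shift_le[of t N] integral_abs_cdf_at_diff[of t]
    Bochner_Integration.integral_cong[OF refl abs_minus_commute, of D "\<lambda>X. cdf_at X t" "\<lambda>X. cdf_at X N"]
  by (simp add: sigma_sq_eq)

end

sublocale atomless_mixture \<subseteq> iid: sequence_space D
  by unfold_locales

context atomless_mixture
begin

abbreviation "P \<equiv> \<Pi>\<^sub>M i\<in>(UNIV :: nat set). D"

lemma space_P_coordinate: "\<omega> \<in> space P \<Longrightarrow> \<omega> i \<in> space D"
  by (auto simp: space_PiM)

lemma measurable_coordinate[measurable]: "(\<lambda>\<omega>. \<omega> i) \<in> P \<rightarrow>\<^sub>M D"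
  by (rule measurable_component_singleton) simp

lemma measurable_unif_mixture_cdf[measurable]: "(\<lambda>\<omega>. unif_mixture_cdf \<omega> I t) \<in> borel_measurable P"
  unfolding unif_mixture_cdf_def by measurable

lemma mono_unif_mixture_cdf: "\<omega> \<in> space P \<Longrightarrow> mono (unif_mixture_cdf \<omega> I)"
  unfolding unif_mixture_cdf_def
  by (intro monoI divide_right_mono sum_mono)
     (auto dest!: space_P_coordinate real_distribution_of_space dest: real_distribution.cdf_at_mono)

lemma unif_mixture_cdf_right_continuous:
  assumes "\<omega> \<in> space P" "t \<noteq> \<infinity>"
  shows "(\<lambda>n. unif_mixture_cdf \<omega> I (ereal_approx_above t n)) \<longlonglongrightarrow> unif_mixture_cdf \<omega> I t"
proof -
  have "(\<lambda>n. \<Sum>i\<in>I. cdf_at (\<omega> i) (ereal_approx_above t n)) \<longlonglongrightarrow> (\<Sum>i\<in>I. cdf_at (\<omega> i) t)"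
    using assms space_P_coordinate real_distribution_of_space real_distribution.cdf_at_right_continuous
    by (intro tendsto_sum) blast
  from tendsto_mult_right[OF this, of "inverse (card I)"] show ?thesis
    by (simp add: unif_mixture_cdf_def divide_inverse)
qed

lemma unif_mixture_cdf_PInf:
  assumes "\<omega> \<in> space P" "finite I" "I \<noteq> {}"
  shows "unif_mixture_cdf \<omega> I \<infinity> = 1"
  using assms space_P_coordinate real_distribution_of_space real_distribution.cdf_at_PInf
  by (simp add: unif_mixture_cdf_def)

end

context mixture_quantile
begin

definition empirical_quantile :: "(nat \<Rightarrow> real measure) \<Rightarrow> nat set \<Rightarrow> ereal" where
  "empirical_quantile \<omega> I = quantile (unif_mixture_cdf \<omega> I) q"

lemma empirical_quantile_le_iff:
  assumes "\<omega> \<in> space P" "finite I" "I \<noteq> {}"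
  shows "empirical_quantile \<omega> I \<le> t \<longleftrightarrow> q \<le> unif_mixture_cdf \<omega> I t"
  unfolding empirical_quantile_def using assms q_le_1
  by (intro quantile_le_iff mono_unif_mixture_cdf unif_mixture_cdf_right_continuous)
     (simp_all add: unif_mixture_cdf_PInf)

lemma measurable_empirical_quantile[measurable]:
  assumes "finite I"
  shows "(\<lambda>\<omega>. empirical_quantile \<omega> I) \<in> borel_measurable P"
proof (cases "I = {}")
  case True
  then have "unif_mixture_cdf \<omega> I = (\<lambda>_. 0)" for \<omega>
    by (simp add: fun_eq_iff unif_mixture_cdf_def)
  then show ?thesis by (simp add: empirical_quantile_def)
next
  case False
  show ?thesis
  proof (rule borel_measurableI_le)
    fix t
    have "{\<omega> \<in> space P. empirical_quantile \<omega> I \<le> t} = {\<omega> \<in> space P. q \<le> unif_mixture_cdf \<omega> I t}"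
      using empirical_quantile_le_iff[OF _ assms False] by auto
    then show "{\<omega> \<in> space P. empirical_quantile \<omega> I \<le> t} \<in> sets P" by simp
  qed
qed

lemma measure_le_Chebyshev_Chernoff:
  fixes \<delta> :: real and B :: "real measure \<Rightarrow> real"
  assumes "finite I" "I \<noteq> {}" "0 < \<delta>"
    and [measurable]: "B \<in> borel_measurable D"
    and B_bounds: "\<And>X. X \<in> space D \<Longrightarrow> 0 \<le> B X \<and> B X \<le> 1"
    and integral_B: "(\<integral>X. B X \<partial>D) = \<delta>"
    and subset: "A \<subseteq> {\<omega> \<in> space P. card I * \<delta> / 2 \<le> \<bar>\<Sum>i\<in>I. cdf_at (\<omega> i) N - q\<bar>}
        \<union> {\<omega> \<in> space P. (\<Sum>i\<in>I. B (\<omega> i)) \<le> card I * \<delta> / 2}"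
  shows "measure P A \<le> 4 * \<sigma>2 / (card I * \<delta>\<^sup>2) + exp (- (card I * \<delta> / 12))"
proof -
  let ?Cheb = "{\<omega> \<in> space P. card I * \<delta> / 2 \<le> \<bar>\<Sum>i\<in>I. cdf_at (\<omega> i) N - q\<bar>}"
  let ?Chern = "{\<omega> \<in> space P. (\<Sum>i\<in>I. B (\<omega> i)) \<le> card I * \<delta> / 2}"
  have "card I > 0" using assms(1,2) by (simp add: card_gt_0_iff)
  have "measure P A \<le> measure P (?Cheb \<union> ?Chern)"
    using subset \<open>finite I\<close> by (intro iid.P.finite_measure_mono) simp_all
  also have "\<dots> \<le> measure P ?Cheb + measure P ?Chern"
    using \<open>finite I\<close> by (intro measure_Un_le) simp_all
  also have "measure P ?Cheb \<le> card I * \<sigma>2 / (card I * \<delta> / 2)\<^sup>2"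
    using iid.Chebyshev_sum_coordinates[of "\<lambda>X. cdf_at X N" I "card I * \<delta> / 2"]
      cdf_at_bounds \<open>finite I\<close> \<open>card I > 0\<close> \<open>0 < \<delta>\<close>
    by (simp add: integral_cdf_at_N sigma_sq_eq mean_sq_dev_def)
  also have "measure P ?Chern \<le> exp (- (card I * \<delta> / 12))"
    using iid.Chernoff_sum_coordinates_lower[of B I] B_bounds \<open>finite I\<close> by (simp add: integral_B)
  also have "card I * \<sigma>2 / (card I * \<delta> / 2)\<^sup>2 = 4 * \<sigma>2 / (card I * \<delta>\<^sup>2)"
    using \<open>card I > 0\<close> \<open>0 < \<delta>\<close> by (simp add: power2_eq_square field_simps)
  finally show ?thesis by simp
qed

lemma mixture_cdf_empirical_quantile_upper_tail:
  fixes \<delta> :: real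
  assumes "finite I" "I \<noteq> {}" "0 < \<delta>"
  shows "measure P {\<omega> \<in> space P. q + \<delta> < F (empirical_quantile \<omega> I)}
      \<le> 4 * \<sigma>2 / (card I * \<delta>\<^sup>2) + exp (- (card I * \<delta> / 12))"
proof (cases "q + \<delta> \<le> 1")
  case False
  then have "\<not> q + \<delta> < F s" for s
    using mixture_cdf_bounds[of s] by linarith
  then have empty: "{\<omega> \<in> space P. q + \<delta> < F (empirical_quantile \<omega> I)} = {}"
    by auto
  show ?thesis
    unfolding empty using sigma_sq_nonneg by simp
next
  case True
  define t where "t = quantile F (q + \<delta>)"
  have F_t: "F t = q + \<delta>"
    unfolding t_def using True q_nonneg \<open>0 < \<delta>\<close> by (intro mixture_cdf_quantile) auto
  have "N \<le> t"
    unfolding N_def using F_t \<open>0 < \<delta>\<close> q_le_1 by (simp add: quantile_mixture_cdf_le_iff)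
  define B where "B X = cdf_at X t - cdf_at X N" for X
  show ?thesis
  proof (rule measure_le_Chebyshev_Chernoff[OF assms, of B])
    show "B \<in> borel_measurable D" unfolding B_def by measurable
    show "0 \<le> B X \<and> B X \<le> 1" if "X \<in> space D" for X
      using real_distribution.cdf_at_mono[OF real_distribution_of_space[OF that] \<open>N \<le> t\<close>]
        cdf_at_bounds[OF that, of N] cdf_at_bounds[OF that, of t] by (auto simp: B_def)
    show "(\<integral>X. B X \<partial>D) = \<delta>"
      using F_t mixture_cdf_N by (simp add: B_def mixture_cdf_def)
  next
    show "{\<omega> \<in> space P. q + \<delta> < F (empirical_quantile \<omega> I)}
      \<subseteq> {\<omega> \<in> space P. card I * \<delta> / 2 \<le> \<bar>\<Sum>i\<in>I. cdf_at (\<omega> i) N - q\<bar>}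
        \<union> {\<omega> \<in> space P. (\<Sum>i\<in>I. B (\<omega> i)) \<le> card I * \<delta> / 2}"
    proof safe
      fix \<omega> assume \<omega>: "\<omega> \<in> space P" and "q + \<delta> < F (empirical_quantile \<omega> I)"
        and "\<not> (\<Sum>i\<in>I. B (\<omega> i)) \<le> card I * \<delta> / 2"
      then have "\<not> empirical_quantile \<omega> I \<le> t"
        using F_t monoD[OF mono_mixture_cdf] by force
      then have "(\<Sum>i\<in>I. cdf_at (\<omega> i) t) < card I * q"
        using empirical_quantile_le_iff[OF \<omega> assms(1,2)] assms(1,2)
        by (simp add: unif_mixture_cdf_def field_simps card_gt_0_iff)
      moreover have "(\<Sum>i\<in>I. cdf_at (\<omega> i) t) = (\<Sum>i\<in>I. cdf_at (\<omega> i) N - q) + (\<Sum>i\<in>I. B (\<omega> i)) + card I * q"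
        by (simp add: B_def sum.distrib sum_subtractf)
      ultimately show "card I * \<delta> / 2 \<le> \<bar>\<Sum>i\<in>I. cdf_at (\<omega> i) N - q\<bar>"
        using \<open>\<not> (\<Sum>i\<in>I. B (\<omega> i)) \<le> card I * \<delta> / 2\<close> by linarith
    qed
  qed
qed

lemma mixture_cdf_empirical_quantile_lower_tail:
  fixes \<delta> :: real
  assumes "finite I" "I \<noteq> {}" "0 < \<delta>"
  shows "measure P {\<omega> \<in> space P. F (empirical_quantile \<omega> I) < q - \<delta>}
      \<le> 4 * \<sigma>2 / (card I * \<delta>\<^sup>2) + exp (- (card I * \<delta> / 12))"
proof (cases "0 \<le> q - \<delta>")
  case False
  then have "\<not> F s < q - \<delta>" for s
    using mixture_cdf_bounds[of s] by linarith
  then have empty: "{\<omega> \<in> space P. F (empirical_quantile \<omega> I) < q - \<delta>} = {}"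
    by auto
  show ?thesis
    unfolding empty using sigma_sq_nonneg by simp
next
  case True
  define t where "t = quantile F (q - \<delta>)"
  have F_t: "F t = q - \<delta>"
    unfolding t_def using True q_le_1 \<open>0 < \<delta>\<close> by (intro mixture_cdf_quantile) auto
  have "t \<le> N"
    unfolding t_def using mixture_cdf_N \<open>0 < \<delta>\<close> q_le_1 by (simp add: quantile_mixture_cdf_le_iff)
  define B where "B X = cdf_at X N - cdf_at X t" for X
  show ?thesis
  proof (rule measure_le_Chebyshev_Chernoff[OF assms, of B])
    show "B \<in> borel_measurable D" unfolding B_def by measurable
    show "0 \<le> B X \<and> B X \<le> 1" if "X \<in> space D" for X
      using real_distribution.cdf_at_mono[OF real_distribution_of_space[OF that] \<open>t \<le> N\<close>]
        cdf_at_bounds[OF that, of N] cdf_at_bounds[OF that, of t] by (auto simp: B_def)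
    show "(\<integral>X. B X \<partial>D) = \<delta>"
      using F_t mixture_cdf_N by (simp add: B_def mixture_cdf_def)
  next
    show "{\<omega> \<in> space P. F (empirical_quantile \<omega> I) < q - \<delta>}
      \<subseteq> {\<omega> \<in> space P. card I * \<delta> / 2 \<le> \<bar>\<Sum>i\<in>I. cdf_at (\<omega> i) N - q\<bar>}
        \<union> {\<omega> \<in> space P. (\<Sum>i\<in>I. B (\<omega> i)) \<le> card I * \<delta> / 2}"
    proof safe
      fix \<omega> assume \<omega>: "\<omega> \<in> space P" and "F (empirical_quantile \<omega> I) < q - \<delta>"
        and "\<not> (\<Sum>i\<in>I. B (\<omega> i)) \<le> card I * \<delta> / 2"
      then have "empirical_quantile \<omega> I \<le> t"
        using F_t monoD[OF mono_mixture_cdf, of t "empirical_quantile \<omega> I"] by force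
      then have "card I * q \<le> (\<Sum>i\<in>I. cdf_at (\<omega> i) t)"
        using empirical_quantile_le_iff[OF \<omega> assms(1,2)] assms(1,2)
        by (simp add: unif_mixture_cdf_def field_simps card_gt_0_iff)
      moreover have "(\<Sum>i\<in>I. cdf_at (\<omega> i) t) = (\<Sum>i\<in>I. cdf_at (\<omega> i) N - q) - (\<Sum>i\<in>I. B (\<omega> i)) + card I * q"
        by (simp add: B_def sum.distrib sum_subtractf)
      ultimately show "card I * \<delta> / 2 \<le> \<bar>\<Sum>i\<in>I. cdf_at (\<omega> i) N - q\<bar>"
        using \<open>\<not> (\<Sum>i\<in>I. B (\<omega> i)) \<le> card I * \<delta> / 2\<close> by linarith
    qed
  qed
qed

lemma mixture_cdf_empirical_quantile_tail:
  fixes \<delta> :: real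
  assumes "finite I" "I \<noteq> {}" "0 < \<delta>"
  shows "measure P {\<omega> \<in> space P. \<delta> < \<bar>F (empirical_quantile \<omega> I) - q\<bar>}
      \<le> (8 * \<sigma>2 * card I + 1152) / ((card I)\<^sup>2 * \<delta>\<^sup>2)"
proof -
  define T where "T = real (card I)"
  have "0 < T" using assms(1,2) by (simp add: T_def card_gt_0_iff)
  have "{\<omega> \<in> space P. \<delta> < \<bar>F (empirical_quantile \<omega> I) - q\<bar>}
      = {\<omega> \<in> space P. q + \<delta> < F (empirical_quantile \<omega> I)}
        \<union> {\<omega> \<in> space P. F (empirical_quantile \<omega> I) < q - \<delta>}"
    by auto
  then have "measure P {\<omega> \<in> space P. \<delta> < \<bar>F (empirical_quantile \<omega> I) - q\<bar>}
      \<le> measure P {\<omega> \<in> space P. q + \<delta> < F (empirical_quantile \<omega> I)}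
        + measure P {\<omega> \<in> space P. F (empirical_quantile \<omega> I) < q - \<delta>}"
    using assms(1) by (simp add: measure_Un_le)
  also have "\<dots> \<le> 2 * (4 * \<sigma>2 / (T * \<delta>\<^sup>2) + exp (- (T * \<delta> / 12)))"
    using mixture_cdf_empirical_quantile_upper_tail[OF assms]
      mixture_cdf_empirical_quantile_lower_tail[OF assms] unfolding T_def mult_2 by (rule add_mono)
  also have "exp (- (T * \<delta> / 12)) \<le> 4 / (T * \<delta> / 12)\<^sup>2"
    using \<open>0 < T\<close> \<open>0 < \<delta>\<close> by (intro exp_neg_le_four_div_square) simp
  also have "2 * (4 * \<sigma>2 / (T * \<delta>\<^sup>2) + 4 / (T * \<delta> / 12)\<^sup>2) = (8 * \<sigma>2 * T + 1152) / (T\<^sup>2 * \<delta>\<^sup>2)"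
    using \<open>0 < T\<close> \<open>0 < \<delta>\<close> by (simp add: field_simps power2_eq_square)
  finally show ?thesis by (simp add: T_def)
qed

end

section \<open>The three-phase estimator\<close>

lemma unif_mixture_cdf_comb_seq_prefix:
  "I \<subseteq> {..<n} \<Longrightarrow> unif_mixture_cdf (comb_seq n \<alpha> \<beta>) I = unif_mixture_cdf \<alpha> I"
  unfolding unif_mixture_cdf_def fun_eq_iff
  by (auto intro!: arg_cong[where f="\<lambda>x. x / _"] sum.cong simp: comb_seq_def)

lemma sum_comb_seq_shift:
  "(\<Sum>i\<in>{n..<n + T}. f (comb_seq n \<alpha> \<beta> i)) = (\<Sum>j\<in>{0..<T}. f (\<beta> j))"
  using sum.shift_bounds_nat_ivl[of "\<lambda>i. f (comb_seq n \<alpha> \<beta> i)" 0 n T]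
  by (simp add: comb_seq_def add.commute)

lemma unif_mixture_cdf_comb_seq_shift:
  "unif_mixture_cdf (comb_seq n \<alpha> \<beta>) {n..<n + T} = unif_mixture_cdf \<beta> {0..<T}"
  using sum_comb_seq_shift[where f="\<lambda>X. cdf_at X _" and n=n and T=T]
  by (simp add: unif_mixture_cdf_def fun_eq_iff)

locale three_phase_estimator = mixture_quantile +
  fixes a1 a2 \<epsilon> :: real
  assumes a1_ge_1: "1 \<le> a1" and a2_ge_1: "1 \<le> a2" and eps_pos: "0 < \<epsilon>" and eps_le_1: "\<epsilon> \<le> 1"
begin

abbreviation "T1 \<equiv> est_T1 a1 \<epsilon>"
abbreviation "N_tilde \<equiv> est_Ntilde a1 q \<epsilon>"
abbreviation "\<sigma>2_tilde \<equiv> est_sigma_sq a1 q \<epsilon>"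
abbreviation "T2 \<equiv> est_T2 a1 a2 q \<epsilon>"
abbreviation "N_hat \<equiv> est_output a1 a2 q \<epsilon>"

lemma T1_bounds: "a1 / \<epsilon> \<le> T1" "T1 \<le> a1 / \<epsilon> + 1"
proof -
  have "0 \<le> a1 / \<epsilon>" using a1_ge_1 eps_pos by simp
  then show "a1 / \<epsilon> \<le> T1" "T1 \<le> a1 / \<epsilon> + 1"
    unfolding est_T1_def by linarith+
qed

lemma T1_eps: "a1 \<le> T1 * \<epsilon>"
  using T1_bounds(1) eps_pos by (simp add: divide_le_eq)

lemma T1_pos: "0 < T1"
  using T1_eps a1_ge_1 by (auto intro: ccontr)

lemma N_tilde_eq: "N_tilde \<omega> = empirical_quantile \<omega> {0..<T1}"
  by (simp add: est_Ntilde_def empirical_quantile_def)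

lemma N_hat_eq: "N_hat \<omega> = empirical_quantile \<omega> {2 * T1..<2 * T1 + T2 \<omega>}"
  by (simp add: est_output_def empirical_quantile_def)

lemma sigma_tilde_nonneg: "0 \<le> \<sigma>2_tilde \<omega>"
  unfolding est_sigma_sq_def by (intro divide_nonneg_nonneg sum_nonneg) auto

lemma T2_bounds:
  "a2 * (1 / \<epsilon> + \<sigma>2_tilde \<omega> / \<epsilon>\<^sup>2) \<le> T2 \<omega>" "T2 \<omega> \<le> a2 * (1 / \<epsilon> + \<sigma>2_tilde \<omega> / \<epsilon>\<^sup>2) + 1"
proof -
  have "0 \<le> a2 * (1 / \<epsilon> + \<sigma>2_tilde \<omega> / \<epsilon>\<^sup>2)"
    using a2_ge_1 eps_pos sigma_tilde_nonneg[of \<omega>] by simp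
  then show "a2 * (1 / \<epsilon> + \<sigma>2_tilde \<omega> / \<epsilon>\<^sup>2) \<le> T2 \<omega>"
      "T2 \<omega> \<le> a2 * (1 / \<epsilon> + \<sigma>2_tilde \<omega> / \<epsilon>\<^sup>2) + 1"
    unfolding est_T2_def by linarith+
qed

lemma T2_ge: "a2 / \<epsilon> \<le> T2 \<omega>"
proof -
  have "a2 / \<epsilon> \<le> a2 * (1 / \<epsilon> + \<sigma>2_tilde \<omega> / \<epsilon>\<^sup>2)"
    using a2_ge_1 sigma_tilde_nonneg[of \<omega>] eps_pos by (simp add: field_simps)
  then show ?thesis using T2_bounds(1)[of \<omega>] by linarith
qed

lemma T2_pos: "0 < T2 \<omega>"
proof -
  have "0 < a2 / \<epsilon>" using a2_ge_1 eps_pos by simp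
  then show ?thesis using T2_ge[of \<omega>] by simp
qed

lemma measurable_N_tilde[measurable]: "N_tilde \<in> borel_measurable P"
  unfolding N_tilde_eq by simp

lemma measurable_cdf_at_N_tilde[measurable]: "(\<lambda>\<omega>. cdf_at (\<omega> i) (N_tilde \<omega>)) \<in> borel_measurable P"
  unfolding cdf_at_def
proof (rule measure_measurable_prob_algebra2[where N=borel])
  have "Sigma (space P) (\<lambda>\<omega>. {y. ereal y \<le> N_tilde \<omega>}) = {x \<in> space (P \<Otimes>\<^sub>M borel). ereal (snd x) \<le> N_tilde (fst x)}"
    by (auto simp: space_pair_measure)
  also have "\<dots> \<in> sets (P \<Otimes>\<^sub>M borel)" by measurable
  finally show "Sigma (space P) (\<lambda>\<omega>. {y. ereal y \<le> N_tilde \<omega>}) \<in> sets (P \<Otimes>\<^sub>M borel)" .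
  show "(\<lambda>\<omega>. \<omega> i) \<in> P \<rightarrow>\<^sub>M prob_algebra borel"
    using measurable_coordinate[of i] measurable_cong_sets[OF refl sets_D, of P] by simp
qed

lemma measurable_sigma_tilde[measurable]: "\<sigma>2_tilde \<in> borel_measurable P"
  unfolding est_sigma_sq_def by measurable

lemma measurable_T2[measurable]: "T2 \<in> P \<rightarrow>\<^sub>M count_space UNIV"
proof (subst measurable_count_space_eq2_countable, safe)
  fix n :: nat
  define r where "r \<omega> = a2 * (1 / \<epsilon> + \<sigma>2_tilde \<omega> / \<epsilon>\<^sup>2)" for \<omega>
  have [measurable]: "r \<in> borel_measurable P" unfolding r_def by measurable
  have "T2 -` {n} \<inter> space P = {\<omega> \<in> space P. nat \<lceil>r \<omega>\<rceil> = n}"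
    by (auto simp: est_T2_def r_def)
  also have "\<dots> = {\<omega> \<in> space P. (n = 0 \<and> r \<omega> \<le> 0) \<or> (0 < n \<and> real n - 1 < r \<omega> \<and> r \<omega> \<le> real n)}"
    by (simp only: nat_ceiling_eq_iff)
  also have "\<dots> \<in> sets P" by measurable
  finally show "T2 -` {n} \<inter> space P \<in> sets P" .
qed simp

lemma measurable_N_hat[measurable]: "N_hat \<in> borel_measurable P"
  unfolding N_hat_eq
  by (rule measurable_compose_countable[where f="\<lambda>T \<omega>. empirical_quantile \<omega> {2 * T1..<2 * T1 + T}"
        and g=T2]) simp_all

lemma N_tilde_comb_seq: "T1 \<le> n \<Longrightarrow> N_tilde (comb_seq n \<alpha> \<beta>) = N_tilde \<alpha>"
  unfolding N_tilde_eq empirical_quantile_def by (subst unif_mixture_cdf_comb_seq_prefix) auto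

lemma sigma_tilde_comb_seq_T1:
  "\<sigma>2_tilde (comb_seq T1 \<alpha> \<beta>) = (\<Sum>j\<in>{0..<T1}. (cdf_at (\<beta> j) (N_tilde \<alpha>) - q)\<^sup>2) / T1"
  using sum_comb_seq_shift[where f="\<lambda>X. (cdf_at X (N_tilde \<alpha>) - q)\<^sup>2" and n=T1 and T=T1]
  by (simp add: est_sigma_sq_def N_tilde_comb_seq mult_2)

lemma sigma_tilde_comb_seq_2T1: "\<sigma>2_tilde (comb_seq (2 * T1) \<alpha> \<beta>) = \<sigma>2_tilde \<alpha>"
  unfolding est_sigma_sq_def N_tilde_comb_seq[of "2 * T1", simplified]
  by (auto intro!: arg_cong[where f="\<lambda>x. x / _"] sum.cong simp: comb_seq_def)

lemma T2_comb_seq_2T1: "T2 (comb_seq (2 * T1) \<alpha> \<beta>) = T2 \<alpha>"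
  unfolding est_T2_def sigma_tilde_comb_seq_2T1 ..

lemma N_hat_comb_seq_2T1: "N_hat (comb_seq (2 * T1) \<alpha> \<beta>) = empirical_quantile \<beta> {0..<T2 \<alpha>}"
  unfolding N_hat_eq T2_comb_seq_2T1 empirical_quantile_def unif_mixture_cdf_comb_seq_shift ..

lemma measure_fail_long_phase3:
  "measure P {\<omega> \<in> space P. \<epsilon> < \<bar>F (N_hat \<omega>) - q\<bar> \<and> a2 * \<sigma>2 / (8 * \<epsilon>\<^sup>2) \<le> T2 \<omega>}
    \<le> 64 / a2 + 1152 / a2\<^sup>2" (is "measure P ?A \<le> ?B")
proof (rule iid.measure_le_comb_seq[where n="2 * T1"])
  show "0 \<le> ?B" using a2_ge_1 by simp
  fix \<alpha> assume "\<alpha> \<in> space P"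
  define T where "T = T2 \<alpha>"
  let ?fail = "{\<beta> \<in> space P. \<epsilon> < \<bar>F (empirical_quantile \<beta> {0..<T}) - q\<bar>}"
  show "measure P {\<beta> \<in> space P. comb_seq (2 * T1) \<alpha> \<beta> \<in> ?A} \<le> ?B"
  proof (cases "a2 * \<sigma>2 / (8 * \<epsilon>\<^sup>2) \<le> T")
    case True
    have "a2 \<le> T * \<epsilon>" "0 < T"
      using T2_ge[of \<alpha>, folded T_def] T2_pos[of \<alpha>, folded T_def] eps_pos
      by (simp_all add: divide_le_eq)
    have "{\<beta> \<in> space P. comb_seq (2 * T1) \<alpha> \<beta> \<in> ?A} = ?fail"
      using True \<open>\<alpha> \<in> space P\<close> iid.comb_seq_in_space
      by (auto simp: N_hat_comb_seq_2T1 T2_comb_seq_2T1 T_def)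
    then have "measure P {\<beta> \<in> space P. comb_seq (2 * T1) \<alpha> \<beta> \<in> ?A}
        \<le> (8 * \<sigma>2 * T + 1152) / (T\<^sup>2 * \<epsilon>\<^sup>2)"
      using mixture_cdf_empirical_quantile_tail[of "{0..<T}" \<epsilon>] \<open>0 < T\<close> eps_pos by simp
    also have "\<dots> = 8 * \<sigma>2 / (T * \<epsilon>\<^sup>2) + 1152 / (T * \<epsilon>)\<^sup>2"
      using \<open>0 < T\<close> eps_pos by (simp add: field_simps power2_eq_square)
    also have "8 * \<sigma>2 / (T * \<epsilon>\<^sup>2) \<le> 64 / a2"
      using True \<open>0 < T\<close> eps_pos a2_ge_1 by (simp add: field_simps)
    also have "1152 / (T * \<epsilon>)\<^sup>2 \<le> 1152 / a2\<^sup>2"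
      using \<open>a2 \<le> T * \<epsilon>\<close> \<open>0 < T\<close> eps_pos a2_ge_1
      by (intro divide_left_mono power_mono mult_pos_pos) auto
    finally show ?thesis by simp
  next
    case False
    then have empty: "{\<beta> \<in> space P. comb_seq (2 * T1) \<alpha> \<beta> \<in> ?A} = {}"
      by (auto simp: T2_comb_seq_2T1 T_def)
    show ?thesis unfolding empty using \<open>0 \<le> ?B\<close> by simp
  qed
qed measurable

lemma sigma_tilde_small_of_short_phase3:
  assumes "T2 \<omega> < a2 * \<sigma>2 / (8 * \<epsilon>\<^sup>2)"
  shows "\<sigma>2_tilde \<omega> < \<sigma>2 / 8"
proof -
  have "a2 * (\<sigma>2_tilde \<omega> / \<epsilon>\<^sup>2) \<le> a2 * (1 / \<epsilon> + \<sigma>2_tilde \<omega> / \<epsilon>\<^sup>2)"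
    using a2_ge_1 eps_pos by (intro mult_left_mono) auto
  also have "\<dots> \<le> T2 \<omega>" by (rule T2_bounds)
  finally have "a2 * (\<sigma>2_tilde \<omega> / \<epsilon>\<^sup>2) < a2 * ((\<sigma>2 / 8) / \<epsilon>\<^sup>2)"
    using assms by simp
  then have "\<sigma>2_tilde \<omega> / \<epsilon>\<^sup>2 < (\<sigma>2 / 8) / \<epsilon>\<^sup>2"
    using a2_ge_1 by (subst (asm) mult_less_cancel_left_pos) auto
  then show ?thesis
    using eps_pos by (simp add: divide_less_cancel field_simps)
qed

lemma a1_le_T1_sigma_sq: "\<epsilon> < \<sigma>2 \<Longrightarrow> a1 \<le> T1 * \<sigma>2"
  by (rule order_trans[OF T1_eps mult_left_mono]) auto

lemma measure_N_tilde_far: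
  assumes "\<epsilon> < \<sigma>2"
  shows "measure P {\<omega> \<in> space P. \<sigma>2 / 4 < \<bar>F (N_tilde \<omega>) - q\<bar>} \<le> 128 / a1 + 18432 / a1\<^sup>2"
proof -
  have "0 < \<sigma>2" using assms eps_pos by simp
  have "a1 \<le> T1 * \<sigma>2"
    using assms by (rule a1_le_T1_sigma_sq)
  have "measure P {\<omega> \<in> space P. \<sigma>2 / 4 < \<bar>F (N_tilde \<omega>) - q\<bar>}
      \<le> (8 * \<sigma>2 * T1 + 1152) / (T1\<^sup>2 * (\<sigma>2 / 4)\<^sup>2)"
    using mixture_cdf_empirical_quantile_tail[of "{0..<T1}" "\<sigma>2 / 4"] T1_pos \<open>0 < \<sigma>2\<close>
    by (simp add: N_tilde_eq)
  also have "\<dots> = 128 / (T1 * \<sigma>2) + 18432 / (T1 * \<sigma>2)\<^sup>2"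
    using T1_pos \<open>0 < \<sigma>2\<close> by (simp add: field_simps power2_eq_square)
  also have "\<dots> \<le> 128 / a1 + 18432 / a1\<^sup>2"
    using \<open>a1 \<le> T1 * \<sigma>2\<close> a1_ge_1 T1_pos \<open>0 < \<sigma>2\<close>
    by (intro add_mono divide_left_mono power_mono mult_pos_pos) auto
  finally show ?thesis .
qed

lemma measure_phase2_average_small:
  assumes "\<epsilon> < \<sigma>2" and close: "\<bar>F t - q\<bar> \<le> \<sigma>2 / 4"
  shows "measure P {\<beta> \<in> space P. (\<Sum>j\<in>{0..<T1}. (cdf_at (\<beta> j) t - q)\<^sup>2) / T1 < \<sigma>2 / 8}
    \<le> exp (- (a1 / 48))"
proof -
  define f where "f X = (cdf_at X t - q)\<^sup>2" for X
  have [measurable]: "f \<in> borel_measurable D" unfolding f_def by measurable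
  have "\<sigma>2 / 4 \<le> D.expectation f"
    unfolding f_def mean_sq_dev_def[symmetric] using close by (rule mean_sq_dev_ge_of_close)
  moreover have "a1 / 4 \<le> T1 * (\<sigma>2 / 4)"
    using a1_le_T1_sigma_sq[OF assms(1)] by simp
  ultimately have "a1 / 4 \<le> T1 * D.expectation f"
    by (meson mult_left_mono of_nat_0_le_iff order_trans)
  have average_small: "(\<Sum>j\<in>{0..<T1}. f (\<beta> j)) \<le> card {0..<T1} * D.expectation f / 2"
    if "(\<Sum>j\<in>{0..<T1}. f (\<beta> j)) / T1 < \<sigma>2 / 8" for \<beta>
  proof -
    have "(\<Sum>j\<in>{0..<T1}. f (\<beta> j)) < T1 * (\<sigma>2 / 8)"
      using that T1_pos by (simp add: divide_less_eq mult.commute)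
    also have "\<dots> \<le> T1 * (D.expectation f / 2)"
      using \<open>\<sigma>2 / 4 \<le> D.expectation f\<close> by (intro mult_left_mono) auto
    finally show ?thesis by simp
  qed
  have "measure P {\<beta> \<in> space P. (\<Sum>j\<in>{0..<T1}. f (\<beta> j)) / T1 < \<sigma>2 / 8}
      \<le> measure P {\<beta> \<in> space P. (\<Sum>j\<in>{0..<T1}. f (\<beta> j)) \<le> card {0..<T1} * D.expectation f / 2}"
    using average_small by (intro iid.P.finite_measure_mono subsetI) (blast, measurable)
  also have "\<dots> \<le> exp (- (card {0..<T1} * D.expectation f / 12))"
    using sq_dev_bounds by (intro iid.Chernoff_sum_coordinates_lower) (auto simp: f_def)
  also have "\<dots> \<le> exp (- (a1 / 48))"
    using \<open>a1 / 4 \<le> T1 * D.expectation f\<close> by simp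
  finally show ?thesis by (simp add: f_def)
qed

lemma measure_sigma_tilde_small:
  assumes "\<epsilon> < \<sigma>2"
  shows "measure P {\<omega> \<in> space P. \<bar>F (N_tilde \<omega>) - q\<bar> \<le> \<sigma>2 / 4 \<and> \<sigma>2_tilde \<omega> < \<sigma>2 / 8}
    \<le> exp (- (a1 / 48))" (is "measure P ?A \<le> _")
proof (rule iid.measure_le_comb_seq[where n=T1])
  fix \<alpha> assume "\<alpha> \<in> space P"
  show "measure P {\<beta> \<in> space P. comb_seq T1 \<alpha> \<beta> \<in> ?A} \<le> exp (- (a1 / 48))"
  proof (cases "\<bar>F (N_tilde \<alpha>) - q\<bar> \<le> \<sigma>2 / 4")
    case True
    have "{\<beta> \<in> space P. comb_seq T1 \<alpha> \<beta> \<in> ?A} \<subseteq>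
        {\<beta> \<in> space P. (\<Sum>j\<in>{0..<T1}. (cdf_at (\<beta> j) (N_tilde \<alpha>) - q)\<^sup>2) / T1 < \<sigma>2 / 8}"
      by (auto simp: sigma_tilde_comb_seq_T1)
    then have "measure P {\<beta> \<in> space P. comb_seq T1 \<alpha> \<beta> \<in> ?A} \<le>
        measure P {\<beta> \<in> space P. (\<Sum>j\<in>{0..<T1}. (cdf_at (\<beta> j) (N_tilde \<alpha>) - q)\<^sup>2) / T1 < \<sigma>2 / 8}"
      by (rule iid.P.finite_measure_mono) measurable
    also have "\<dots> \<le> exp (- (a1 / 48))"
      by (rule measure_phase2_average_small[OF assms True])
    finally show ?thesis .
  next
    case False
    then have empty: "{\<beta> \<in> space P. comb_seq T1 \<alpha> \<beta> \<in> ?A} = {}"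
      by (auto simp: N_tilde_comb_seq)
    show ?thesis unfolding empty by simp
  qed
qed (simp, measurable)

lemma measure_short_phase3:
  "measure P {\<omega> \<in> space P. T2 \<omega> < a2 * \<sigma>2 / (8 * \<epsilon>\<^sup>2)}
    \<le> 128 / a1 + 18432 / a1\<^sup>2 + exp (- (a1 / 48))"
proof (cases "\<epsilon> < \<sigma>2")
  case True
  have "{\<omega> \<in> space P. T2 \<omega> < a2 * \<sigma>2 / (8 * \<epsilon>\<^sup>2)}
      \<subseteq> {\<omega> \<in> space P. \<sigma>2 / 4 < \<bar>F (N_tilde \<omega>) - q\<bar>}
        \<union> {\<omega> \<in> space P. \<bar>F (N_tilde \<omega>) - q\<bar> \<le> \<sigma>2 / 4 \<and> \<sigma>2_tilde \<omega> < \<sigma>2 / 8}"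
    using sigma_tilde_small_of_short_phase3 by force
  then have "measure P {\<omega> \<in> space P. T2 \<omega> < a2 * \<sigma>2 / (8 * \<epsilon>\<^sup>2)}
      \<le> measure P {\<omega> \<in> space P. \<sigma>2 / 4 < \<bar>F (N_tilde \<omega>) - q\<bar>}
        + measure P {\<omega> \<in> space P. \<bar>F (N_tilde \<omega>) - q\<bar> \<le> \<sigma>2 / 4 \<and> \<sigma>2_tilde \<omega> < \<sigma>2 / 8}"
    by (intro order_trans[OF iid.P.finite_measure_mono measure_Un_le]) measurable
  also have "\<dots> \<le> 128 / a1 + 18432 / a1\<^sup>2 + exp (- (a1 / 48))"
    using measure_N_tilde_far[OF True] measure_sigma_tilde_small[OF True] by (rule add_mono)
  finally show ?thesis .
next
  case False
  have "a2 * \<sigma>2 / (8 * \<epsilon>\<^sup>2) \<le> a2 / \<epsilon>"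
    using False a2_ge_1 eps_pos by (simp add: field_simps power2_eq_square)
  then have empty: "{\<omega> \<in> space P. T2 \<omega> < a2 * \<sigma>2 / (8 * \<epsilon>\<^sup>2)} = {}"
    using T2_ge by (auto simp: not_less intro: order_trans)
  show ?thesis
    unfolding empty using a1_ge_1 by simp
qed

lemma measure_estimate_fails:
  "measure P {\<omega> \<in> space P. \<epsilon> < \<bar>F (N_hat \<omega>) - q\<bar>}
    \<le> 64 / a2 + 1152 / a2\<^sup>2 + (128 / a1 + 18432 / a1\<^sup>2 + exp (- (a1 / 48)))"
proof -
  have "{\<omega> \<in> space P. \<epsilon> < \<bar>F (N_hat \<omega>) - q\<bar>}
      \<subseteq> {\<omega> \<in> space P. \<epsilon> < \<bar>F (N_hat \<omega>) - q\<bar> \<and> a2 * \<sigma>2 / (8 * \<epsilon>\<^sup>2) \<le> T2 \<omega>}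
        \<union> {\<omega> \<in> space P. T2 \<omega> < a2 * \<sigma>2 / (8 * \<epsilon>\<^sup>2)}"
    by auto
  then have "measure P {\<omega> \<in> space P. \<epsilon> < \<bar>F (N_hat \<omega>) - q\<bar>}
      \<le> measure P {\<omega> \<in> space P. \<epsilon> < \<bar>F (N_hat \<omega>) - q\<bar> \<and> a2 * \<sigma>2 / (8 * \<epsilon>\<^sup>2) \<le> T2 \<omega>}
        + measure P {\<omega> \<in> space P. T2 \<omega> < a2 * \<sigma>2 / (8 * \<epsilon>\<^sup>2)}"
    by (intro order_trans[OF iid.P.finite_measure_mono measure_Un_le]) measurable
  also have "\<dots> \<le> 64 / a2 + 1152 / a2\<^sup>2 + (128 / a1 + 18432 / a1\<^sup>2 + exp (- (a1 / 48)))"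
    using measure_fail_long_phase3 measure_short_phase3 by (rule add_mono)
  finally show ?thesis .
qed

lemma estimate_succeeds:
  assumes "2000 \<le> a1" "2000 \<le> a2"
  shows "1 / 2 \<le> measure P {\<omega> \<in> space P. \<bar>F (N_hat \<omega>) - q\<bar> \<le> \<epsilon>}"
proof -
  have "64 / a2 \<le> 64 / 2000" "1152 / a2\<^sup>2 \<le> 1152 / 2000\<^sup>2"
    "128 / a1 \<le> 128 / 2000" "18432 / a1\<^sup>2 \<le> 18432 / 2000\<^sup>2"
    using assms by (intro divide_left_mono power_mono; simp)+
  moreover have "exp (- (a1 / 48)) \<le> 1 / 40"
  proof -
    have "40 \<le> exp (a1 / 48)"
      using exp_ge_add_one_self[of "a1 / 48"] assms(1) by linarith
    then show ?thesis by (simp add: exp_minus field_simps)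
  qed
  ultimately have "measure P {\<omega> \<in> space P. \<epsilon> < \<bar>F (N_hat \<omega>) - q\<bar>} \<le> 1 / 2"
    using measure_estimate_fails by (simp add: power2_eq_square)
  moreover have "{\<omega> \<in> space P. \<bar>F (N_hat \<omega>) - q\<bar> \<le> \<epsilon>}
      = space P - {\<omega> \<in> space P. \<epsilon> < \<bar>F (N_hat \<omega>) - q\<bar>}"
    by auto
  ultimately show ?thesis
    by (simp add: iid.P.prob_compl)
qed

lemma expectation_N_tilde_error:
  "(\<integral>\<omega>. \<bar>F (N_tilde \<omega>) - q\<bar> \<partial>P) \<le> \<sigma>2 + 4641 * \<epsilon>"
proof -
  define A where "A = (8 * \<sigma>2 * T1 + 1152) / (real T1)\<^sup>2"
  have "0 < \<epsilon> + \<sigma>2" using eps_pos sigma_sq_nonneg by simp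
  have "(\<integral>\<omega>. \<bar>F (N_tilde \<omega>) - q\<bar> \<partial>P) \<le> (\<epsilon> + \<sigma>2) + 4 * A / (\<epsilon> + \<sigma>2)"
  proof (rule iid.P.expectation_le_of_quadratic_tail)
    show "0 \<le> \<bar>F (N_tilde \<omega>) - q\<bar> \<and> \<bar>F (N_tilde \<omega>) - q\<bar> \<le> 1" for \<omega>
      using abs_mixture_cdf_diff_le_1 by simp
    show "measure P {\<omega> \<in> space P. \<delta> < \<bar>F (N_tilde \<omega>) - q\<bar>} \<le> A / \<delta>\<^sup>2" if "0 < \<delta>" for \<delta>
      using mixture_cdf_empirical_quantile_tail[of "{0..<T1}" \<delta>] T1_pos that
      by (simp add: N_tilde_eq A_def)
  qed (use \<open>0 < \<epsilon> + \<sigma>2\<close> sigma_sq_nonneg in \<open>simp_all add: A_def\<close>)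
  also have "4 * A / (\<epsilon> + \<sigma>2) \<le> 4640 * \<epsilon>"
  proof -
    define u where "u = T1 * \<epsilon>"
    have "1 \<le> u"
      using T1_eps a1_ge_1 by (simp add: u_def)
    have "32 * (\<sigma>2 * T1) \<le> (4640 * u) * (\<sigma>2 * T1)"
      using \<open>1 \<le> u\<close> sigma_sq_nonneg by (intro mult_right_mono) auto
    moreover have "1 * 1 \<le> u * u"
      using \<open>1 \<le> u\<close> by (intro mult_mono) auto
    ultimately have "32 * \<sigma>2 * T1 + 4608 \<le> 4640 * \<epsilon> * (T1\<^sup>2 * (\<epsilon> + \<sigma>2))"
      by (simp add: u_def power2_eq_square algebra_simps)
    moreover have "0 < T1\<^sup>2 * (\<epsilon> + \<sigma>2)"
      using T1_pos \<open>0 < \<epsilon> + \<sigma>2\<close> by simp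
    moreover have "4 * A / (\<epsilon> + \<sigma>2) = (32 * \<sigma>2 * T1 + 4608) / (T1\<^sup>2 * (\<epsilon> + \<sigma>2))"
      by (simp add: A_def divide_divide_eq_left algebra_simps)
    ultimately show ?thesis
      by (simp add: pos_divide_le_eq mult.commute mult.left_commute)
  qed
  finally show ?thesis by simp
qed

lemma nn_integral_sigma_tilde:
  "(\<integral>\<^sup>+\<omega>. ennreal (\<sigma>2_tilde \<omega>) \<partial>P) \<le> ennreal (4 * \<sigma>2 + 9282 * \<epsilon>)"
proof -
  have "(\<integral>\<^sup>+\<omega>. ennreal (\<sigma>2_tilde \<omega>) \<partial>P)
      = (\<integral>\<^sup>+\<alpha>. (\<integral>\<^sup>+\<beta>. ennreal (\<sigma>2_tilde (comb_seq T1 \<alpha> \<beta>)) \<partial>P) \<partial>P)"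
    by (rule iid.nn_integral_comb_seq) simp
  also have "\<dots> = (\<integral>\<^sup>+\<alpha>. ennreal (mean_sq_dev (N_tilde \<alpha>)) \<partial>P)"
    unfolding sigma_tilde_comb_seq_T1 mean_sq_dev_def
    using sq_dev_bounds T1_pos by (intro nn_integral_cong iid.nn_integral_average_coordinates) auto
  also have "\<dots> \<le> (\<integral>\<^sup>+\<alpha>. ennreal (2 * \<sigma>2 + 2 * \<bar>F (N_tilde \<alpha>) - q\<bar>) \<partial>P)"
    by (intro nn_integral_mono ennreal_leI mean_sq_dev_le_sigma_sq)
  also have "\<dots> = ennreal (\<integral>\<alpha>. 2 * \<sigma>2 + 2 * \<bar>F (N_tilde \<alpha>) - q\<bar> \<partial>P)"
  proof (intro nn_integral_eq_integral iid.P.integrable_bounded[where B=4] AE_I2)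
    fix \<alpha>
    show "0 \<le> 2 * \<sigma>2 + 2 * \<bar>F (N_tilde \<alpha>) - q\<bar>"
      using sigma_sq_nonneg by simp
    then show "\<bar>2 * \<sigma>2 + 2 * \<bar>F (N_tilde \<alpha>) - q\<bar>\<bar> \<le> 4"
      using abs_mixture_cdf_diff_le_1[of "N_tilde \<alpha>"] sigma_sq_le_1 by simp
  qed simp
  also have "(\<integral>\<alpha>. 2 * \<sigma>2 + 2 * \<bar>F (N_tilde \<alpha>) - q\<bar> \<partial>P) = 2 * \<sigma>2 + 2 * (\<integral>\<alpha>. \<bar>F (N_tilde \<alpha>) - q\<bar> \<partial>P)"
    using abs_mixture_cdf_diff_le_1
    by (subst Bochner_Integration.integral_add)
       (auto intro!: iid.P.integrable_bounded[where B=1] simp: iid.P.prob_space)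
  also have "\<dots> \<le> 4 * \<sigma>2 + 9282 * \<epsilon>"
    using expectation_N_tilde_error by simp
  finally show ?thesis by (simp add: ennreal_leI)
qed

lemma nn_integral_sample_count:
  "(\<integral>\<^sup>+\<omega>. ennreal (est_samples a1 a2 q \<epsilon> \<omega>) \<partial>P)
    \<le> ennreal ((2 * a1 + 3 + 9283 * a2) * (1 / \<epsilon> + \<sigma>2 / \<epsilon>\<^sup>2))"
proof -
  define c where "c = 2 * (a1 / \<epsilon> + 1) + a2 / \<epsilon> + 1"
  define k where "k = a2 / \<epsilon>\<^sup>2"
  have "0 \<le> c" "0 \<le> k" using a1_ge_1 a2_ge_1 eps_pos by (simp_all add: c_def k_def)
  have "est_samples a1 a2 q \<epsilon> \<omega> \<le> c + k * \<sigma>2_tilde \<omega>" for \<omega>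
  proof -
    have "a2 * (1 / \<epsilon> + \<sigma>2_tilde \<omega> / \<epsilon>\<^sup>2) = a2 / \<epsilon> + k * \<sigma>2_tilde \<omega>"
      by (simp add: k_def field_simps)
    then show ?thesis
      using T1_bounds(2) T2_bounds(2)[of \<omega>] by (simp add: est_samples_def c_def)
  qed
  then have "ennreal (est_samples a1 a2 q \<epsilon> \<omega>) \<le> ennreal c + ennreal k * ennreal (\<sigma>2_tilde \<omega>)" for \<omega>
    using \<open>0 \<le> c\<close> \<open>0 \<le> k\<close> sigma_tilde_nonneg[of \<omega>]
    by (simp add: ennreal_leI flip: ennreal_plus ennreal_mult)
  then have "(\<integral>\<^sup>+\<omega>. ennreal (est_samples a1 a2 q \<epsilon> \<omega>) \<partial>P)
      \<le> (\<integral>\<^sup>+\<omega>. ennreal c + ennreal k * ennreal (\<sigma>2_tilde \<omega>) \<partial>P)"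
    by (intro nn_integral_mono)
  also have "\<dots> = ennreal c + ennreal k * (\<integral>\<^sup>+\<omega>. ennreal (\<sigma>2_tilde \<omega>) \<partial>P)"
    by (simp add: nn_integral_add nn_integral_cmult iid.P.emeasure_space_1)
  also have "\<dots> \<le> ennreal c + ennreal k * ennreal (4 * \<sigma>2 + 9282 * \<epsilon>)"
    by (intro add_left_mono mult_left_mono nn_integral_sigma_tilde) simp
  also have "\<dots> = ennreal (c + k * (4 * \<sigma>2 + 9282 * \<epsilon>))"
    using \<open>0 \<le> c\<close> \<open>0 \<le> k\<close> sigma_sq_nonneg eps_pos by (simp add: ennreal_plus ennreal_mult)
  also have "c + k * (4 * \<sigma>2 + 9282 * \<epsilon>) \<le> (2 * a1 + 3 + 9283 * a2) * (1 / \<epsilon> + \<sigma>2 / \<epsilon>\<^sup>2)"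
  proof -
    have "1 \<le> 1 / \<epsilon>" using eps_pos eps_le_1 by simp
    moreover have "4 * a2 * (\<sigma>2 / \<epsilon>\<^sup>2) \<le> (2 * a1 + 3 + 9283 * a2) * (\<sigma>2 / \<epsilon>\<^sup>2)"
      using a1_ge_1 a2_ge_1 sigma_sq_nonneg by (intro mult_right_mono) auto
    moreover have "c + k * (4 * \<sigma>2 + 9282 * \<epsilon>)
        = (2 * a1 + 9283 * a2) * (1 / \<epsilon>) + 3 + 4 * a2 * (\<sigma>2 / \<epsilon>\<^sup>2)"
      using eps_pos by (simp add: c_def k_def field_simps power2_eq_square)
    ultimately show ?thesis by (simp add: algebra_simps)
  qed
  finally show ?thesis by (simp add: ennreal_leI)
qed

theorem (in three_phase_estimator) estimator_guarantee:
  assumes "2000 \<le> a1" "2000 \<le> a2"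
  shows "(\<integral>\<^sup>+\<omega>. ennreal (est_samples a1 a2 q \<epsilon> \<omega>) \<partial>P)
      \<le> ennreal ((2 * a1 + 3 + 9283 * a2) * (1 / \<epsilon> + \<sigma>2 / \<epsilon>\<^sup>2))
    \<and> 1 / 2 \<le> measure P {\<omega> \<in> space P. \<bar>F (N_hat \<omega>) - q\<bar> \<le> \<epsilon>}"
  using nn_integral_sample_count estimate_succeeds[OF assms] ..

end

theorem theorem4p3:
  "\<exists>a0::real. \<forall>a1 a2. a0 \<le> a1 \<and> a0 \<le> a2 \<longrightarrow>
     (\<exists>C c::real. 0 < C \<and> 0 < c \<and>
       (\<forall>(D :: real measure measure) (q::real) (\<epsilon>::real).
          prob_space D \<longrightarrow> sets D = sets (prob_algebra (borel :: real measure)) \<longrightarrow>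
          (AE X in D. \<forall>x::real. measure X {x} = 0) \<longrightarrow>
          0 \<le> q \<longrightarrow> q \<le> 1 \<longrightarrow> 0 < \<epsilon> \<longrightarrow> \<epsilon> \<le> 1 \<longrightarrow>
          (\<integral>\<^sup>+ \<omega>. ennreal (real (est_samples a1 a2 q \<epsilon> \<omega>)) \<partial>(PiM UNIV (\<lambda>_::nat. D)))
             \<le> ennreal (C * (1 / \<epsilon> + sigma_sq D q / \<epsilon>\<^sup>2)) \<and>
          measure (PiM UNIV (\<lambda>_::nat. D))
            {\<omega> \<in> space (PiM UNIV (\<lambda>_::nat. D)).
               \<bar>mixture_cdf D (est_output a1 a2 q \<epsilon> \<omega>) - q\<bar> \<le> \<epsilon>} \<ge> c))"
proof (rule exI[of _ 2000], intro allI impI, goal_cases)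
  case (1 a1 a2)
  then have a: "2000 \<le> a1" "2000 \<le> a2" by simp_all
  have is_estimator: "three_phase_estimator D q a1 a2 \<epsilon>"
    if "prob_space D" "sets D = sets (prob_algebra borel)" "AE X in D. \<forall>x. measure X {x} = 0"
      "0 \<le> q" "q \<le> 1" "0 < \<epsilon>" "\<epsilon> \<le> 1" for D q \<epsilon>
    using that a
    by (intro three_phase_estimator.intro mixture_quantile.intro atomless_mixture.intro
        atomless_mixture_axioms.intro mixture_quantile_axioms.intro three_phase_estimator_axioms.intro)
       simp_all
  show ?case
    by (rule exI[of _ "2 * a1 + 3 + 9283 * a2"], rule exI[of _ "1 / 2"],
        intro conjI[OF _ conjI] allI impI)
       (use a three_phase_estimator.estimator_guarantee[OF _ a, OF is_estimator] in simp_all)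
qed

end
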